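(* Let $1<p\le2$, $p'=p/(p-1)$, and $p\le b\le p'$. Assume $\sup_{\xi}\|v_\xi\|_{L^\infty(\overline{M})}/\|u_\xi\|_{L^\infty(\overline{M})}<\infty$. Let $\varphi$ be a positive function on $\mathcal{I}$ with $M_\varphi:=\sup_{t>0}t\sum_{\xi:\,t\le\varphi(\xi)}\|u_\xi\|^2_{L^\infty(\overline{M})}<\infty$. Then for every $f\in L^p(\overline{M})$, $$\Big(\sum_{\xi\in\mathcal{I}}\big(|\mathcal{F}_Lf(\xi)|\,\varphi(\xi)^{\frac1b-\frac1{p'}}\big)^b\,\|u_\xi\|_{L^\infty(\overline{M})}^{1-\frac{b}{p'}}\,\|v_\xi\|_{L^\infty(\overline{M})}^{1-\frac{b}{p}}\Big)^{1/b}\lesssim_p M_\varphi^{\frac1b-\frac1{p'}}\|f\|_{L^p(\overline{M})}.$$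
   Context: Standing setup: $\overline{M}$ is a smooth orientable manifold with (possibly empty) boundary and smooth density $dx$. $L$ is a pseudo-differential operator on its interior with boundary conditions giving discrete spectrum $\{\lambda_\xi\}_{\xi\in\mathcal{I}}$, eigenfunctions $u_\xi$ of $L$ and $v_\xi$ of $L^*$ ($L^*v_\xi=\overline{\lambda_\xi}v_\xi$), $\|u_\xi\|_{L^2}=\|v_\xi\|_{L^2}=1$, $(u_\xi,v_\eta)_{L^2}=\delta_{\xi\eta}$, $\{u_\xi\}$ a Riesz basis of $L^2(\overline{M})$, $u_\xi,v_\xi\in L^\infty$. $\mathcal{F}_Lf(\xi):=\int_{\overline{M}}f(x)\overline{v_\xi(x)}\,dx$. *)

theory Defs
  imports "HOL-Probability.Probability"
begin

definition in_Lp :: "'a measure \<Rightarrow> real \<Rightarrow> ('a \<Rightarrow> complex) \<Rightarrow> bool" where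
  "in_Lp M p f \<longleftrightarrow> f \<in> borel_measurable M \<and> integrable M (\<lambda>x. norm (f x) powr p)"

definition Lp_norm :: "'a measure \<Rightarrow> real \<Rightarrow> ('a \<Rightarrow> complex) \<Rightarrow> real" where
  "Lp_norm M p f = (\<integral>x. norm (f x) powr p \<partial>M) powr (1 / p)"

definition in_Linf :: "'a measure \<Rightarrow> ('a \<Rightarrow> complex) \<Rightarrow> bool" where
  "in_Linf M f \<longleftrightarrow> f \<in> borel_measurable M \<and> esssup M (\<lambda>x. ereal (norm (f x))) < \<infinity>"

definition Linf_norm :: "'a measure \<Rightarrow> ('a \<Rightarrow> complex) \<Rightarrow> real" where
  "Linf_norm M f = real_of_ereal (esssup M (\<lambda>x. ereal (norm (f x))))"

definition L2_inner :: "'a measure \<Rightarrow> ('a \<Rightarrow> complex) \<Rightarrow> ('a \<Rightarrow> complex) \<Rightarrow> complex" where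
  "L2_inner M f g = (\<integral>x. f x * cnj (g x) \<partial>M)"

definition riesz_basis :: "'a measure \<Rightarrow> ('i \<Rightarrow> 'a \<Rightarrow> complex) \<Rightarrow> bool" where
  "riesz_basis M u \<longleftrightarrow>
     (\<forall>\<xi>. in_Lp M 2 (u \<xi>)) \<and>
     (\<exists>A B. 0 < A \<and> 0 < B \<and>
        (\<forall>F c. finite F \<longrightarrow>
           A * (\<Sum>\<xi>\<in>F. (cmod (c \<xi>))\<^sup>2) \<le> (Lp_norm M 2 (\<lambda>x. \<Sum>\<xi>\<in>F. c \<xi> * u \<xi> x))\<^sup>2 \<and>
           (Lp_norm M 2 (\<lambda>x. \<Sum>\<xi>\<in>F. c \<xi> * u \<xi> x))\<^sup>2 \<le> B * (\<Sum>\<xi>\<in>F. (cmod (c \<xi>))\<^sup>2))) \<and>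
     (\<forall>f. in_Lp M 2 f \<longrightarrow> (\<forall>\<epsilon>>0. \<exists>F c. finite F \<and>
           Lp_norm M 2 (\<lambda>x. f x - (\<Sum>\<xi>\<in>F. c \<xi> * u \<xi> x)) < \<epsilon>))"

definition FL :: "'a measure \<Rightarrow> ('i \<Rightarrow> 'a \<Rightarrow> complex) \<Rightarrow> ('a \<Rightarrow> complex) \<Rightarrow> 'i \<Rightarrow> complex" where
  "FL M v f \<xi> = (\<integral>x. f x * cnj (v \<xi> x) \<partial>M)"

definition Mphi :: "'a measure \<Rightarrow> ('i \<Rightarrow> 'a \<Rightarrow> complex) \<Rightarrow> ('i \<Rightarrow> real) \<Rightarrow> ennreal" where
  "Mphi M u \<phi> = (SUP t\<in>{0<..}. ennreal t *
      (\<Sum>\<^sub>\<infinity>\<xi>\<in>{\<xi>. t \<le> \<phi> \<xi>}. ennreal ((Linf_norm M (u \<xi>))\<^sup>2)))"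

end

theory Submission
  imports Defs
begin

text \<open>
  For \<open>p = 2\<close> the estimate is Bessel's inequality for the biorthogonal system, which follows from
  the lower Riesz bound: approximate \<open>h\<close> by finite combinations of the \<open>u\<^sub>\<xi>\<close>, whose
  \<open>L\<close>-Fourier coefficients are read off by biorthogonality.

  For \<open>p < 2\<close> the transform is bounded from \<open>L\<^sup>1\<close> into \<open>l\<^sup>\<infinity>\<close> with weight
  \<open>\<parallel>v\<^sub>\<xi>\<parallel>\<^sub>\<infinity>\<close>, which the hypothesis on the ratio allows to replace by
  \<open>\<parallel>u\<^sub>\<xi>\<parallel>\<^sub>\<infinity>\<close>, and from \<open>L\<^sup>2\<close> into \<open>l\<^sup>2\<close>. Cutting the index set into
  dyadic level sets of \<open>|F\<^sub>L f| / (\<phi> \<parallel>u\<^sub>\<xi>\<parallel>\<^sub>\<infinity>)\<close> and splitting \<open>f\<close> on each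
  level at a height proportional to the level gives Paley's inequality
  \<open>\<Sum> |F\<^sub>L f|^p (\<phi> \<parallel>u\<^sub>\<xi>\<parallel>\<^sub>\<infinity>)^(2-p) \<lesssim> M\<^sub>\<phi>^(2-p) \<parallel>f\<parallel>\<^sub>p^p\<close>.
  For the weight \<open>\<phi> = (|F\<^sub>L f| / \<parallel>v\<^sub>\<xi>\<parallel>\<^sub>\<infinity>)^p'\<close> the same inequality becomes the
  Hausdorff-Young inequality \<open>\<Sum> |F\<^sub>L f|^p' \<parallel>v\<^sub>\<xi>\<parallel>\<^sub>\<infinity>^(2-p') \<lesssim> \<parallel>f\<parallel>\<^sub>p^p'\<close>.
  The summand of the theorem is the geometric mean of the two endpoint summands with weights
  \<open>t = (p' - b) / (p' - p)\<close> and \<open>1 - t\<close>, so Holder's inequality interpolates between them;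
  bounds on all finite partial sums give summability.
\<close>

lemma dyadic_bracket:
  fixes x :: real
  assumes "1 \<le> x"
  obtains j :: nat where "2^j \<le> x" "x < 2^Suc j"
proof -
  obtain n :: nat where n: "x < 2^n" using real_arch_pow[of 2 x] by auto
  define j where "j = (LEAST j. x < 2^Suc j)"
  have "(2::real)^n \<le> 2^Suc n" by simp
  then have "x < 2^Suc n" using n by linarith
  then have upper: "x < 2^Suc j" unfolding j_def by (rule LeastI)
  have lower: "2^j \<le> x"
  proof (cases j)
    case (Suc k)
    then have "\<not> x < 2^Suc k" using not_less_Least[of k "\<lambda>j. x < 2^Suc j"] j_def by auto
    then show ?thesis using Suc by simp
  qed (use assms in simp)
  show ?thesis using that lower upper .
qed

lemma geometric_powr_sum_below:
  fixes r0 y a :: real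
  assumes "0 < r0" "0 < a" "0 < y"
  shows "(\<Sum>j\<le>n. if r0 * 2^j < y then (r0 * 2^j) powr a else 0) \<le> y powr a / (1 - 2 powr (-a))"
proof -
  define d where "d = 1 - 2 powr (-a)"
  have d: "0 < d" using assms by (simp add: d_def powr_minus_divide)
  have step: "(r0 * 2^Suc j) powr a = 2 powr a * (r0 * 2^j) powr a" for j
    using assms by (simp add: powr_mult[symmetric] mult_ac)
  have "d * (\<Sum>j\<le>n. if r0 * 2^j < y then (r0 * 2^j) powr a else 0) \<le> (min y (r0 * 2^n)) powr a"
  proof (induction n)
    case 0
    then show ?case
      using assms d by (auto simp: d_def min_def powr_minus_divide intro: powr_mono2)
  next
    case (Suc n)
    show ?case
    proof (cases "r0 * 2^Suc n < y")
      case True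
      moreover have "r0 * 2^n \<le> r0 * 2^Suc n" using assms by simp
      ultimately have "r0 * 2^n < y" by linarith
      then have "d * (\<Sum>j\<le>Suc n. if r0 * 2^j < y then (r0 * 2^j) powr a else 0)
          \<le> (r0 * 2^n) powr a + d * (r0 * 2^Suc n) powr a"
        using Suc True by (simp add: algebra_simps min_def)
      also have "\<dots> = (r0 * 2^Suc n) powr a"
        unfolding step d_def by (simp add: algebra_simps powr_minus_divide)
      finally show ?thesis using True by simp
    next
      case False
      then have "d * (\<Sum>j\<le>Suc n. if r0 * 2^j < y then (r0 * 2^j) powr a else 0)
          \<le> (min y (r0 * 2^n)) powr a"
        using Suc by simp
      also have "\<dots> \<le> (min y (r0 * 2^Suc n)) powr a"
        using assms by (intro powr_mono2) (auto simp: min_def)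
      finally show ?thesis .
    qed
  qed
  also have "(min y (r0 * 2^n)) powr a \<le> y powr a"
    using assms by (intro powr_mono2) auto
  finally show ?thesis using d by (simp add: d_def field_simps)
qed

lemma geometric_powr_sum_above:
  fixes r0 y a :: real
  assumes "0 < r0" "0 < a" "0 < y"
  shows "(\<Sum>j\<le>n. if y \<le> r0 * 2^j then (r0 * 2^j) powr (-a) else 0) \<le> y powr (-a) / (1 - 2 powr (-a))"
proof -
  define d where "d = 1 - 2 powr (-a)"
  have d: "0 < d" using assms by (simp add: d_def powr_minus_divide)
  define S where "S n = (\<Sum>j\<le>n. if y \<le> r0 * 2^j then (r0 * 2^j) powr (-a) else 0)" for n
  have step: "(r0 * 2^Suc j) powr (-a) = 2 powr (-a) * (r0 * 2^j) powr (-a)" for j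
    using assms by (simp add: powr_mult[symmetric] mult_ac)
  have anti: "x powr (-a) \<le> y powr (-a)" if "y \<le> x" for x
    using assms that by (intro powr_mono2') auto
  text \<open>The invariant also reserves room for the next term of the geometric series.\<close>
  have key: "d * S n + (if y \<le> r0 * 2^n then (r0 * 2^Suc n) powr (-a) else 0) \<le> y powr (-a)
      \<and> (r0 * 2^n < y \<longrightarrow> S n = 0)" for n
  proof (induction n)
    case 0
    have "d * r0 powr (-a) + 2 powr (-a) * r0 powr (-a) = r0 powr (-a)"
      by (simp add: d_def algebra_simps)
    then show ?case using anti[of r0] step[of 0] by (auto simp: S_def)
  next
    case (Suc n)
    have mono: "r0 * 2^n \<le> r0 * 2^Suc n" using assms by simp
    show ?case
    proof (cases "y \<le> r0 * 2^Suc n")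
      case True
      have geo: "d * (r0 * 2^Suc n) powr (-a) + (r0 * 2^Suc (Suc n)) powr (-a) = (r0 * 2^Suc n) powr (-a)"
        unfolding step[of "Suc n"] by (simp add: d_def algebra_simps)
      have S: "S (Suc n) = S n + (r0 * 2^Suc n) powr (-a)" using True by (simp add: S_def)
      show ?thesis
      proof (cases "y \<le> r0 * 2^n")
        case True
        then show ?thesis using Suc S geo \<open>y \<le> r0 * 2^Suc n\<close> by (auto simp: algebra_simps)
      next
        case False
        then have "S n = 0" using Suc by auto
        then show ?thesis using S geo True anti[of "r0 * 2^Suc n"] by auto
      qed
    next
      case False
      then have "S n = 0" using Suc mono by auto
      then have "S (Suc n) = 0" using False by (simp add: S_def)
      then show ?thesis using False by auto
    qed
  qed
  have "0 \<le> (if y \<le> r0 * 2^n then (r0 * 2^Suc n) powr (-a) else 0)" by simp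
  then have "d * S n \<le> y powr (-a)" using key[of n] by linarith
  then show ?thesis using d by (simp add: S_def d_def field_simps)
qed

lemma sum_powr_holder:
  fixes x y :: "'i \<Rightarrow> real"
  assumes F: "finite F" and t: "0 \<le> t" "t \<le> 1"
    and x: "\<And>i. i \<in> F \<Longrightarrow> 0 \<le> x i" and y: "\<And>i. i \<in> F \<Longrightarrow> 0 \<le> y i"
  shows "(\<Sum>i\<in>F. x i powr t * y i powr (1 - t)) \<le> (\<Sum>i\<in>F. x i) powr t * (\<Sum>i\<in>F. y i) powr (1 - t)"
proof -
  define X where "X = (\<Sum>i\<in>F. x i)"
  define Y where "Y = (\<Sum>i\<in>F. y i)"
  have "0 \<le> X" "0 \<le> Y" using x y by (auto simp: X_def Y_def intro: sum_nonneg)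
  show ?thesis
  proof (cases "X = 0 \<or> Y = 0")
    case True
    then have "(\<forall>i\<in>F. x i = 0) \<or> (\<forall>i\<in>F. y i = 0)"
      using F x y by (auto simp: X_def Y_def sum_nonneg_eq_0_iff)
    then show ?thesis
      using \<open>0 \<le> X\<close> \<open>0 \<le> Y\<close> by (auto simp flip: X_def Y_def)
  next
    case False
    then have XY: "0 < X" "0 < Y" using \<open>0 \<le> X\<close> \<open>0 \<le> Y\<close> by auto
    have "x i powr t * y i powr (1 - t) \<le> X powr t * Y powr (1 - t) * (t / X * x i + (1 - t) / Y * y i)"
      if i: "i \<in> F" for i
    proof (cases "x i = 0 \<or> y i = 0")
      case True
      then show ?thesis using x[OF i] y[OF i] XY t by auto
    next
      case False
      then have pos: "0 < x i / X" "0 < y i / Y" using x[OF i] y[OF i] XY by auto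
      have "x i powr t * y i powr (1 - t) = X powr t * Y powr (1 - t) * ((x i / X) powr t * (y i / Y) powr (1 - t))"
        using XY x[OF i] y[OF i] by (simp add: powr_divide)
      also have "\<dots> \<le> X powr t * Y powr (1 - t) * (t * (x i / X) + (1 - t) * (y i / Y))"
        using Youngs_inequality_0[of t "1 - t" "x i / X" "y i / Y"] pos t
        by (intro mult_left_mono) auto
      finally show ?thesis by simp
    qed
    then have "(\<Sum>i\<in>F. x i powr t * y i powr (1 - t))
        \<le> (\<Sum>i\<in>F. X powr t * Y powr (1 - t) * (t / X * x i + (1 - t) / Y * y i))"
      by (rule sum_mono)
    also have "\<dots> = X powr t * Y powr (1 - t) * (t / X * X + (1 - t) / Y * Y)"
      by (simp only: sum_distrib_left[symmetric] sum.distrib X_def Y_def)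
    finally show ?thesis using XY by (simp add: X_def Y_def)
  qed
qed

lemma norm_add_sq_le:
  fixes x y :: "'a :: real_normed_vector"
  assumes "0 < d"
  shows "(norm (x + y))^2 \<le> (1 + d) * (norm x)^2 + (1 + 1/d) * (norm y)^2"
proof -
  have "(norm (x + y))^2 \<le> (norm x + norm y)^2"
    by (intro power_mono norm_triangle_ineq) auto
  also have "\<dots> = (1 + d) * (norm x)^2 + (1 + 1/d) * (norm y)^2 - (d * norm x - norm y)^2 / d"
    using assms by (simp add: field_simps power2_eq_square)
  also have "\<dots> \<le> (1 + d) * (norm x)^2 + (1 + 1/d) * (norm y)^2"
    using assms by simp
  finally show ?thesis .
qed

section \<open>Square-integrable functions and truncations\<close>

lemma measurable_cnj [measurable]:
  "h \<in> borel_measurable M \<Longrightarrow> (\<lambda>x. cnj (h x)) \<in> borel_measurable M"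
  by (rule borel_measurable_continuous_on) (auto intro: continuous_intros)

lemma in_Lp_2_iff: "in_Lp M 2 g \<longleftrightarrow> g \<in> borel_measurable M \<and> integrable M (\<lambda>x. (norm (g x))^2)"
  by (simp add: in_Lp_def)

lemma Lp_norm_2_sq: "(Lp_norm M 2 g)^2 = (\<integral>x. (norm (g x))^2 \<partial>M)"
  by (simp add: Lp_norm_def powr_half_sqrt integral_nonneg_AE)

lemma in_Lp_2_add: "in_Lp M 2 g \<Longrightarrow> in_Lp M 2 h \<Longrightarrow> in_Lp M 2 (\<lambda>x. g x + h x)"
  unfolding in_Lp_2_iff
proof (elim conjE, intro conjI)
  assume g: "g \<in> borel_measurable M" "integrable M (\<lambda>x. (norm (g x))^2)"
    and h: "h \<in> borel_measurable M" "integrable M (\<lambda>x. (norm (h x))^2)"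
  then show "(\<lambda>x. g x + h x) \<in> borel_measurable M" by simp
  show "integrable M (\<lambda>x. (norm (g x + h x))^2)"
  proof (rule Bochner_Integration.integrable_bound)
    show "integrable M (\<lambda>x. 2 * (norm (g x))^2 + 2 * (norm (h x))^2)" using g h by simp
    show "AE x in M. norm ((norm (g x + h x))^2) \<le> norm (2 * (norm (g x))^2 + 2 * (norm (h x))^2)"
      using norm_add_sq_le[of 1 "g _" "h _"] by simp
  qed (use g h in measurable)
qed

lemma in_Lp_2_cmult: "in_Lp M 2 g \<Longrightarrow> in_Lp M 2 (\<lambda>x. c * g x)"
  unfolding in_Lp_2_iff by (auto simp: norm_mult power_mult_distrib)

lemma in_Lp_2_diff: "in_Lp M 2 g \<Longrightarrow> in_Lp M 2 h \<Longrightarrow> in_Lp M 2 (\<lambda>x. g x - h x)"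
  using in_Lp_2_add[of M g "\<lambda>x. (-1) * h x"] in_Lp_2_cmult[of M h "-1"] by simp

lemma in_Lp_2_sum:
  "finite G \<Longrightarrow> (\<And>\<eta>. \<eta> \<in> G \<Longrightarrow> in_Lp M 2 (f \<eta>)) \<Longrightarrow> in_Lp M 2 (\<lambda>x. \<Sum>\<eta>\<in>G. f \<eta> x)"
proof (induction G rule: finite_induct)
  case (insert \<eta> G)
  then show ?case using in_Lp_2_add[of M "f \<eta>" "\<lambda>x. \<Sum>\<eta>\<in>G. f \<eta> x"] by simp
qed (simp add: in_Lp_2_iff)

text \<open>AM-GM inside the integral; with \<open>e\<close> free this replaces the Cauchy-Schwarz inequality.\<close>
lemma norm_integral_mult_cnj_le:
  assumes g: "in_Lp M 2 g" and h: "in_Lp M 2 h" and e: "0 < e"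
  shows "integrable M (\<lambda>x. g x * cnj (h x))"
    and "norm (\<integral>x. g x * cnj (h x) \<partial>M)
           \<le> ((\<integral>x. (norm (g x))^2 \<partial>M) / e + e * (\<integral>x. (norm (h x))^2 \<partial>M)) / 2"
proof -
  have int: "integrable M (\<lambda>x. ((norm (g x))^2 / e + e * (norm (h x))^2) / 2)"
    using g h by (simp add: in_Lp_2_iff)
  have pointwise: "norm (g x * cnj (h x)) \<le> ((norm (g x))^2 / e + e * (norm (h x))^2) / 2" for x
  proof -
    have "0 \<le> (norm (g x) - e * norm (h x))^2 / e" using e by simp
    also have "\<dots> = (norm (g x))^2 / e + e * (norm (h x))^2 - 2 * (norm (g x) * norm (h x))"
      using e by (simp add: field_simps power2_eq_square)
    finally show ?thesis by (simp add: norm_mult)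
  qed
  show prod_int: "integrable M (\<lambda>x. g x * cnj (h x))"
  proof (rule Bochner_Integration.integrable_bound[OF int])
    show "AE x in M. norm (g x * cnj (h x)) \<le> norm (((norm (g x))^2 / e + e * (norm (h x))^2) / 2)"
      by (intro AE_I2 order_trans[OF pointwise]) (simp only: real_norm_def abs_ge_self)
    show "(\<lambda>x. g x * cnj (h x)) \<in> borel_measurable M"
      using g h unfolding in_Lp_2_iff by (auto intro!: borel_measurable_times measurable_cnj)
  qed
  have "norm (\<integral>x. g x * cnj (h x) \<partial>M) \<le> (\<integral>x. norm (g x * cnj (h x)) \<partial>M)"
    by (rule integral_norm_bound)
  also have "\<dots> \<le> (\<integral>x. ((norm (g x))^2 / e + e * (norm (h x))^2) / 2 \<partial>M)"
    using prod_int int pointwise by (intro integral_mono) auto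
  also have "\<dots> = ((\<integral>x. (norm (g x))^2 \<partial>M) / e + e * (\<integral>x. (norm (h x))^2 \<partial>M)) / 2"
    using g h by (simp add: in_Lp_2_iff)
  finally show "norm (\<integral>x. g x * cnj (h x) \<partial>M)
      \<le> ((\<integral>x. (norm (g x))^2 \<partial>M) / e + e * (\<integral>x. (norm (h x))^2 \<partial>M)) / 2" .
qed

lemma Linf_norm_AE:
  assumes "in_Linf M f"
  shows "AE x in M. norm (f x) \<le> Linf_norm M f"
  using esssup_AE[of "\<lambda>x. ereal (norm (f x))" M]
proof eventually_elim
  case (elim x)
  then show ?case
    using assms unfolding in_Linf_def Linf_norm_def
    by (cases "esssup M (\<lambda>x. ereal (norm (f x)))") auto
qed

lemma Linf_norm_pos:
  assumes "in_Linf M f" and "Lp_norm M 2 f = 1"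
  shows "0 < Linf_norm M f"
proof (rule ccontr)
  assume "\<not> 0 < Linf_norm M f"
  then have "Linf_norm M f \<le> 0" by simp
  have "AE x in M. norm (f x) \<le> 0"
    using Linf_norm_AE[OF assms(1)] by eventually_elim (use \<open>Linf_norm M f \<le> 0\<close> in linarith)
  then have "AE x in M. (norm (f x))^2 = 0"
    by eventually_elim simp
  then have "(Lp_norm M 2 f)^2 = 0"
    unfolding Lp_norm_2_sq by (rule integral_eq_zero_AE)
  then show False using assms(2) by simp
qed

lemma integrable_mult_cnj_Linf:
  assumes g: "integrable M g" and f: "in_Linf M f"
  shows "integrable M (\<lambda>x. g x * cnj (f x))"
    and "norm (\<integral>x. g x * cnj (f x) \<partial>M) \<le> Linf_norm M f * (\<integral>x. norm (g x) \<partial>M)"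
proof -
  have ae: "AE x in M. norm (g x * cnj (f x)) \<le> Linf_norm M f * norm (g x)"
    using Linf_norm_AE[OF f] by eventually_elim (simp add: norm_mult mult_right_mono mult.commute)
  show int: "integrable M (\<lambda>x. g x * cnj (f x))"
  proof (rule Bochner_Integration.integrable_bound)
    show "integrable M (\<lambda>x. Linf_norm M f * norm (g x))" using g by simp
    show "AE x in M. norm (g x * cnj (f x)) \<le> norm (Linf_norm M f * norm (g x))"
      using ae by eventually_elim (erule order_trans, simp add: abs_ge_self)
  qed (use g f in \<open>auto simp: in_Linf_def\<close>)
  have "norm (\<integral>x. g x * cnj (f x) \<partial>M) \<le> (\<integral>x. norm (g x * cnj (f x)) \<partial>M)"
    by (rule integral_norm_bound)
  also have "\<dots> \<le> (\<integral>x. Linf_norm M f * norm (g x) \<partial>M)"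
    using int g ae by (intro integral_mono_AE) auto
  finally show "norm (\<integral>x. g x * cnj (f x) \<partial>M) \<le> Linf_norm M f * (\<integral>x. norm (g x) \<partial>M)"
    by simp
qed

definition upper_part :: "real \<Rightarrow> ('a \<Rightarrow> complex) \<Rightarrow> 'a \<Rightarrow> complex" where
  "upper_part s f x = (if s < norm (f x) then f x else 0)"

definition lower_part :: "real \<Rightarrow> ('a \<Rightarrow> complex) \<Rightarrow> 'a \<Rightarrow> complex" where
  "lower_part s f x = (if s < norm (f x) then 0 else f x)"

lemma norm_upper_part: "norm (upper_part s f x) = (if s < norm (f x) then norm (f x) else 0)"
  by (simp add: upper_part_def)

lemma norm_lower_part_sq: "(norm (lower_part s f x))^2 = (if norm (f x) \<le> s then (norm (f x))^2 else 0)"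
  by (simp add: lower_part_def)

lemma upper_part_add_lower_part: "(\<lambda>x. upper_part s f x + lower_part s f x) = f"
  by (auto simp: upper_part_def lower_part_def)

lemma integrable_upper_part:
  assumes f: "in_Lp M p f" and p: "1 < p" and s: "0 < s"
  shows "integrable M (upper_part s f)"
proof (rule Bochner_Integration.integrable_bound)
  have "f \<in> borel_measurable M" using f by (simp add: in_Lp_def)
  then show "upper_part s f \<in> borel_measurable M"
    unfolding upper_part_def by measurable
  show "integrable M (\<lambda>x. s powr (1 - p) * norm (f x) powr p)"
    using f by (simp add: in_Lp_def)
  show "AE x in M. norm (upper_part s f x) \<le> norm (s powr (1 - p) * norm (f x) powr p)"
  proof (intro AE_I2)
    fix x
    show "norm (upper_part s f x) \<le> norm (s powr (1 - p) * norm (f x) powr p)"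
    proof (cases "s < norm (f x)")
      case True
      have "norm (f x) = norm (f x) powr (1 - p) * norm (f x) powr p"
        using True s by (simp add: powr_add[symmetric])
      also have "\<dots> \<le> s powr (1 - p) * norm (f x) powr p"
        using True s p by (intro mult_right_mono powr_mono2') auto
      finally show ?thesis using True by (simp add: upper_part_def)
    qed (simp add: upper_part_def)
  qed
qed

lemma in_Lp_2_lower_part:
  assumes f: "in_Lp M p f" and p: "p < 2" and s: "0 < s"
  shows "in_Lp M 2 (lower_part s f)"
  unfolding in_Lp_2_iff
proof
  have "f \<in> borel_measurable M" using f by (simp add: in_Lp_def)
  then show meas: "lower_part s f \<in> borel_measurable M"
    unfolding lower_part_def by measurable
  show "integrable M (\<lambda>x. (norm (lower_part s f x))^2)"
  proof (rule Bochner_Integration.integrable_bound)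
    show "integrable M (\<lambda>x. s powr (2 - p) * norm (f x) powr p)"
      using f by (simp add: in_Lp_def)
    show "AE x in M. norm ((norm (lower_part s f x))^2) \<le> norm (s powr (2 - p) * norm (f x) powr p)"
    proof (intro AE_I2)
      fix x
      show "norm ((norm (lower_part s f x))^2) \<le> norm (s powr (2 - p) * norm (f x) powr p)"
      proof (cases "s < norm (f x) \<or> f x = 0")
        case False
        then have fx: "0 < norm (f x)" "norm (f x) \<le> s" by auto
        have "(norm (f x))^2 = norm (f x) powr (2 - p) * norm (f x) powr p"
          using fx by (simp add: powr_add[symmetric])
        also have "\<dots> \<le> s powr (2 - p) * norm (f x) powr p"
          using fx p by (intro mult_right_mono powr_mono2) auto
        finally show ?thesis using False by (simp add: lower_part_def)
      qed (auto simp: lower_part_def)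
    qed
  qed (use meas in measurable)
qed

section \<open>Paley's and the Hausdorff-Young inequality\<close>

lemma sum_le_sum_dyadic_bands:
  fixes l w :: "'i \<Rightarrow> real"
  assumes F: "finite F" and r0: "0 < r0"
    and l: "\<And>\<xi>. \<xi> \<in> F \<Longrightarrow> r0 \<le> l \<xi>" and w: "\<And>\<xi>. \<xi> \<in> F \<Longrightarrow> 0 \<le> w \<xi>"
  obtains n where
    "(\<Sum>\<xi>\<in>F. w \<xi>) \<le> (\<Sum>j\<le>n. \<Sum>\<xi>\<in>{\<xi>\<in>F. r0 * 2^j \<le> l \<xi> \<and> l \<xi> < 2 * (r0 * 2^j)}. w \<xi>)"
proof -
  define band where "band j \<xi> \<longleftrightarrow> r0 * 2^j \<le> l \<xi> \<and> l \<xi> < 2 * (r0 * 2^j)" for j \<xi>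
  have "\<exists>j. band j \<xi>" if \<xi>: "\<xi> \<in> F" for \<xi>
  proof -
    obtain j where "2^j \<le> l \<xi> / r0" "l \<xi> / r0 < 2^Suc j"
      using dyadic_bracket[of "l \<xi> / r0"] l[OF \<xi>] r0 by auto
    then show ?thesis using r0 by (auto simp: band_def field_simps)
  qed
  then obtain j where j: "\<And>\<xi>. \<xi> \<in> F \<Longrightarrow> band (j \<xi>) \<xi>" by metis
  obtain n where n: "\<And>\<xi>. \<xi> \<in> F \<Longrightarrow> j \<xi> \<le> n"
    using F finite_nat_set_iff_bounded_le[of "j ` F"] by auto
  have "(\<Sum>\<xi>\<in>F. w \<xi>) \<le> (\<Sum>\<xi>\<in>F. \<Sum>k\<le>n. if band k \<xi> then w \<xi> else 0)"
  proof (rule sum_mono)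
    fix \<xi> assume \<xi>: "\<xi> \<in> F"
    have "w \<xi> = (if band (j \<xi>) \<xi> then w \<xi> else 0)" using j[OF \<xi>] by simp
    also have "\<dots> \<le> (\<Sum>k\<le>n. if band k \<xi> then w \<xi> else 0)"
      by (rule member_le_sum) (use n[OF \<xi>] w[OF \<xi>] in auto)
    finally show "w \<xi> \<le> (\<Sum>k\<le>n. if band k \<xi> then w \<xi> else 0)" .
  qed
  also have "\<dots> = (\<Sum>k\<le>n. \<Sum>\<xi>\<in>{\<xi>\<in>F. band k \<xi>}. w \<xi>)"
    by (simp add: sum.swap[of _ F] sum.inter_filter[OF F])
  finally show ?thesis using that unfolding band_def by blast
qed

text \<open>The condition on \<open>N\<close> is the weak-type bound behind \<open>M\<^sub>\<phi>\<close>; summing it over the dyadic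
  levels \<open>\<sigma> / 2^(j+1)\<close> controls the indices of small weight.\<close>
lemma sum_sq_small_weights_le:
  fixes \<phi> a :: "'i \<Rightarrow> real"
  assumes F: "finite F" and \<phi>: "\<And>\<xi>. \<xi> \<in> F \<Longrightarrow> 0 < \<phi> \<xi>"
    and N: "\<And>t. 0 < t \<Longrightarrow> t * (\<Sum>\<xi>\<in>{\<xi>\<in>F. t \<le> \<phi> \<xi>}. (a \<xi>)^2) \<le> N"
    and \<sigma>: "0 < \<sigma>"
  shows "(\<Sum>\<xi>\<in>{\<xi>\<in>F. \<phi> \<xi> \<le> \<sigma>}. (\<phi> \<xi> * a \<xi>)^2) \<le> 4 * N * \<sigma>"
proof -
  define S where "S = {\<xi>\<in>F. \<phi> \<xi> \<le> \<sigma>}"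
  define t where "t j = \<sigma> / 2^Suc j" for j :: nat
  have t: "0 < t j" for j using \<sigma> by (simp add: t_def)
  have "0 \<le> \<sigma> * (\<Sum>\<xi>\<in>{\<xi>\<in>F. \<sigma> \<le> \<phi> \<xi>}. (a \<xi>)^2)"
    using \<sigma> by (intro mult_nonneg_nonneg sum_nonneg) auto
  then have "0 \<le> N" using N[OF \<sigma>] by linarith
  obtain n where n: "(\<Sum>\<xi>\<in>S. (\<phi> \<xi> * a \<xi>)^2)
      \<le> (\<Sum>j\<le>n. \<Sum>\<xi>\<in>{\<xi>\<in>S. 2^j \<le> \<sigma> / \<phi> \<xi> \<and> \<sigma> / \<phi> \<xi> < 2 * 2^j}. (\<phi> \<xi> * a \<xi>)^2)"
    using sum_le_sum_dyadic_bands[of S 1 "\<lambda>\<xi>. \<sigma> / \<phi> \<xi>" "\<lambda>\<xi>. (\<phi> \<xi> * a \<xi>)^2"] F \<phi>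
    by (auto simp: S_def)
  also have "\<dots> \<le> (\<Sum>j\<le>n. 4 * N * t j)"
  proof (rule sum_mono)
    fix j
    define band where "band = {\<xi>\<in>S. 2^j \<le> \<sigma> / \<phi> \<xi> \<and> \<sigma> / \<phi> \<xi> < 2 * 2^j}"
    have "(\<Sum>\<xi>\<in>band. (\<phi> \<xi> * a \<xi>)^2) \<le> (\<Sum>\<xi>\<in>{\<xi>\<in>F. t j \<le> \<phi> \<xi>}. 4 * (t j)^2 * (a \<xi>)^2)"
    proof (rule sum_le_included[where i = id])
      show "\<forall>\<xi>\<in>band. \<exists>\<eta>\<in>{\<xi>\<in>F. t j \<le> \<phi> \<xi>}. id \<eta> = \<xi> \<and> (\<phi> \<xi> * a \<xi>)^2 \<le> 4 * (t j)^2 * (a \<eta>)^2"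
      proof
        fix \<xi> assume \<xi>: "\<xi> \<in> band"
        then have "0 < \<phi> \<xi>" "t j < \<phi> \<xi>" "\<phi> \<xi> \<le> 2 * t j"
          using \<phi> by (auto simp: band_def S_def t_def field_simps)
        then have "(\<phi> \<xi>)^2 \<le> (2 * t j)^2" by (intro power_mono) auto
        then have "(\<phi> \<xi> * a \<xi>)^2 \<le> 4 * (t j)^2 * (a \<xi>)^2"
          by (simp add: power_mult_distrib mult_right_mono)
        then show "\<exists>\<eta>\<in>{\<xi>\<in>F. t j \<le> \<phi> \<xi>}. id \<eta> = \<xi> \<and> (\<phi> \<xi> * a \<xi>)^2 \<le> 4 * (t j)^2 * (a \<eta>)^2"
          using \<xi> \<open>t j < \<phi> \<xi>\<close> by (auto simp: band_def S_def)
      qed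
    qed (use F in \<open>auto simp: band_def S_def\<close>)
    also have "\<dots> = 4 * t j * (t j * (\<Sum>\<xi>\<in>{\<xi>\<in>F. t j \<le> \<phi> \<xi>}. (a \<xi>)^2))"
      by (simp add: sum_distrib_left power2_eq_square mult_ac)
    also have "\<dots> \<le> 4 * t j * N"
      using N[OF t[of j]] t[of j] by (intro mult_left_mono) auto
    finally show "(\<Sum>\<xi>\<in>band. (\<phi> \<xi> * a \<xi>)^2) \<le> 4 * N * t j" by (simp add: mult_ac)
  qed
  also have "\<dots> = 4 * N * \<sigma> * (\<Sum>j\<le>n. (1/2)^Suc j)"
    by (simp add: t_def sum_distrib_left power_one_over)
  also have "(\<Sum>j\<le>n. (1/2::real)^Suc j) = 1 - (1/2)^Suc n"
    by (induction n) auto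
  also have "4 * N * \<sigma> * (1 - (1/2)^Suc n) \<le> 4 * N * \<sigma>"
    using \<open>0 \<le> N\<close> \<sigma> by (simp add: mult_left_le)
  finally show ?thesis unfolding S_def .
qed

lemma dyadic_sum_upper_le:
  fixes r0 c x p :: real
  assumes r0: "0 < r0" and c: "0 < c" and x: "0 \<le> x" and p: "1 < p"
  shows "(\<Sum>j\<le>n. (r0 * 2^j) powr (p - 1) * (if c * (r0 * 2^j) < x then x else 0))
    \<le> c powr (1 - p) / (1 - 2 powr (1 - p)) * x powr p"
proof (cases "x = 0")
  case True
  then show ?thesis unfolding True by (simp cong: if_cong)
next
  case False
  then have "0 < x" using x by simp
  have "(\<Sum>j\<le>n. (r0 * 2^j) powr (p - 1) * (if c * (r0 * 2^j) < x then x else 0))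
      = x * (\<Sum>j\<le>n. if r0 * 2^j < x / c then (r0 * 2^j) powr (p - 1) else 0)"
    using c by (simp add: sum_distrib_left field_simps if_distrib cong: if_cong)
  also have "\<dots> \<le> x * ((x / c) powr (p - 1) / (1 - 2 powr (1 - p)))"
    using geometric_powr_sum_below[OF r0, of "p - 1" "x / c" n] p c \<open>0 < x\<close>
    by (intro mult_left_mono) auto
  also have "\<dots> = (x * (x / c) powr (p - 1)) / (1 - 2 powr (1 - p))" by simp
  also have "x * (x / c) powr (p - 1) = c powr (1 - p) * x powr p"
    using c \<open>0 < x\<close> by (simp add: powr_divide powr_diff powr_minus_divide field_simps)
  finally show ?thesis by simp
qed

lemma dyadic_sum_lower_le:
  fixes r0 c x p :: real
  assumes r0: "0 < r0" and c: "0 < c" and x: "0 \<le> x" and p: "p < 2"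
  shows "(\<Sum>j\<le>n. (r0 * 2^j) powr (p - 2) * (if x \<le> c * (r0 * 2^j) then x^2 else 0))
    \<le> c powr (2 - p) / (1 - 2 powr (p - 2)) * x powr p"
proof (cases "x = 0")
  case True
  then show ?thesis unfolding True by (simp cong: if_cong)
next
  case False
  then have "0 < x" using x by simp
  have "(\<Sum>j\<le>n. (r0 * 2^j) powr (p - 2) * (if x \<le> c * (r0 * 2^j) then x^2 else 0))
      = x^2 * (\<Sum>j\<le>n. if x / c \<le> r0 * 2^j then (r0 * 2^j) powr (-(2 - p)) else 0)"
    using c by (simp add: sum_distrib_left field_simps if_distrib cong: if_cong)
  also have "\<dots> \<le> x^2 * ((x / c) powr (-(2 - p)) / (1 - 2 powr (p - 2)))"
    using geometric_powr_sum_above[OF r0, of "2 - p" "x / c" n] p c \<open>0 < x\<close>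
    by (intro mult_left_mono) auto
  also have "\<dots> = (x^2 * (x / c) powr (-(2 - p))) / (1 - 2 powr (p - 2))" by simp
  also have "x^2 * (x / c) powr (-(2 - p)) = c powr (2 - p) * x powr p"
  proof -
    have "x^2 = x powr 2" using \<open>0 < x\<close> by simp
    then show ?thesis
      using c \<open>0 < x\<close> by (simp add: powr_divide powr_diff powr_minus_divide field_simps flip: powr_add)
  qed
  finally show ?thesis by simp
qed

definition paley_const :: "real \<Rightarrow> real" where
  "paley_const p = 2 powr p * (8 / (1 - 2 powr (1 - p)) + 4 / (1 - 2 powr (p - 2)))"

lemma paley_const_pos: "1 < p \<Longrightarrow> p < 2 \<Longrightarrow> 0 < paley_const p"
  unfolding paley_const_def by (intro mult_pos_pos add_pos_pos divide_pos_pos) (auto simp: powr_less_one)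

text \<open>Truncating at height \<open>N / B\<close> times the level makes both geometric sums contribute
  the same factor \<open>N powr (2 - p) * B powr (p - 1)\<close>.\<close>
lemma dyadic_sums_split_le:
  fixes r0 N B x p :: real
  assumes r0: "0 < r0" and N: "0 < N" and B: "0 < B" and x: "0 \<le> x" and p: "1 < p" "p < 2"
  shows "2 powr p * 8 * N * (\<Sum>j\<le>n. (r0 * 2^j) powr (p - 1) * (if N / B * (r0 * 2^j) < x then x else 0))
       + 2 powr p * 4 * B * (\<Sum>j\<le>n. (r0 * 2^j) powr (p - 2) * (if x \<le> N / B * (r0 * 2^j) then x^2 else 0))
    \<le> paley_const p * B powr (p - 1) * N powr (2 - p) * x powr p"
proof -
  define c where "c = N / B"
  have c: "0 < c" using N B by (simp add: c_def)
  have "2 powr p * 8 * N * (\<Sum>j\<le>n. (r0 * 2^j) powr (p - 1) * (if c * (r0 * 2^j) < x then x else 0))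
       + 2 powr p * 4 * B * (\<Sum>j\<le>n. (r0 * 2^j) powr (p - 2) * (if x \<le> c * (r0 * 2^j) then x^2 else 0))
      \<le> 2 powr p * 8 * N * (c powr (1 - p) / (1 - 2 powr (1 - p)) * x powr p)
       + 2 powr p * 4 * B * (c powr (2 - p) / (1 - 2 powr (p - 2)) * x powr p)"
    using dyadic_sum_upper_le[OF r0 c x p(1)] dyadic_sum_lower_le[OF r0 c x p(2)] N B
    by (intro add_mono mult_left_mono) auto
  also have "\<dots> = 2 powr p * (8 / (1 - 2 powr (1 - p)) * (N * c powr (1 - p))
      + 4 / (1 - 2 powr (p - 2)) * (B * c powr (2 - p))) * x powr p"
    by (simp add: ring_distribs mult_ac)
  also have "N * c powr (1 - p) = N powr (2 - p) * B powr (p - 1)"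
    using N B by (simp add: c_def powr_divide powr_diff field_simps power2_eq_square flip: powr_add)
  also have "B * c powr (2 - p) = N powr (2 - p) * B powr (p - 1)"
    using N B by (simp add: c_def powr_divide powr_diff field_simps power2_eq_square flip: powr_add)
  also have "2 powr p * (8 / (1 - 2 powr (1 - p)) * (N powr (2 - p) * B powr (p - 1))
      + 4 / (1 - 2 powr (p - 2)) * (N powr (2 - p) * B powr (p - 1))) * x powr p
      = paley_const p * B powr (p - 1) * N powr (2 - p) * x powr p"
    unfolding paley_const_def by (simp add: ring_distribs mult_ac)
  finally show ?thesis by (simp add: c_def)
qed

lemma sum_dyadic_truncations_le:
  fixes f :: "'a \<Rightarrow> complex"
  assumes f: "in_Lp M p f" and p: "1 < p" "p < 2" and B: "0 < B" and N: "0 < N" and r0: "0 < r0"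
  shows "(\<Sum>j\<le>n. (2 * (r0 * 2^j)) powr p *
           (8 * N / (r0 * 2^j) * (\<integral>x. norm (upper_part (N / B * (r0 * 2^j)) f x) \<partial>M)
            + 4 * B / (r0 * 2^j)^2 * (\<integral>x. (norm (lower_part (N / B * (r0 * 2^j)) f x))^2 \<partial>M)))
    \<le> paley_const p * B powr (p - 1) * N powr (2 - p) * (\<integral>x. norm (f x) powr p \<partial>M)"
proof -
  define c where "c = N / B"
  have c: "0 < c" using N B by (simp add: c_def)
  define r where "r j = r0 * 2^j" for j :: nat
  have r: "0 < r j" for j using r0 by (simp add: r_def)
  define C where "C = paley_const p * B powr (p - 1) * N powr (2 - p)"
  define q where "q j x = 2 powr p * 8 * N * (r j powr (p - 1) * norm (upper_part (c * r j) f x))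
      + 2 powr p * 4 * B * (r j powr (p - 2) * (norm (lower_part (c * r j) f x))^2)" for j x
  have upper: "integrable M (\<lambda>x. norm (upper_part (c * r j) f x))" for j
    using integrable_upper_part[OF f p(1), of "c * r j"] c r by simp
  have lower: "integrable M (\<lambda>x. (norm (lower_part (c * r j) f x))^2)" for j
    using in_Lp_2_lower_part[OF f p(2), of "c * r j"] c r by (simp add: in_Lp_2_iff)
  have weights: "(2 * r j) powr p * (8 * N / r j * I1 + 4 * B / (r j)^2 * I2)
      = 2 powr p * 8 * N * (r j powr (p - 1) * I1) + 2 powr p * 4 * B * (r j powr (p - 2) * I2)"
    for j I1 I2
  proof -
    have "(2 * r j) powr p / r j = 2 powr p * r j powr (p - 1)"
      "(2 * r j) powr p / (r j)^2 = 2 powr p * r j powr (p - 2)"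
      using r[of j] by (simp_all add: powr_mult powr_diff flip: powr_numeral)
    moreover have "(2 * r j) powr p * (8 * N / r j * I1 + 4 * B / (r j)^2 * I2)
        = (2 * r j) powr p / r j * (8 * N * I1) + (2 * r j) powr p / (r j)^2 * (4 * B * I2)"
      using r[of j] by (simp add: field_simps)
    ultimately show ?thesis by (simp add: mult_ac)
  qed
  have "(\<Sum>j\<le>n. (2 * r j) powr p * (8 * N / r j * (\<integral>x. norm (upper_part (c * r j) f x) \<partial>M)
          + 4 * B / (r j)^2 * (\<integral>x. (norm (lower_part (c * r j) f x))^2 \<partial>M)))
      = (\<Sum>j\<le>n. \<integral>x. q j x \<partial>M)"
    by (rule sum.cong[OF refl], subst weights) (use upper lower in \<open>simp add: q_def[abs_def]\<close>)
  also have "\<dots> = (\<integral>x. (\<Sum>j\<le>n. q j x) \<partial>M)"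
    using upper lower by (simp add: integral_sum q_def)
  also have "\<dots> \<le> (\<integral>x. C * norm (f x) powr p \<partial>M)"
  proof (rule integral_mono)
    show "integrable M (\<lambda>x. \<Sum>j\<le>n. q j x)" using upper lower by (simp add: q_def)
    show "integrable M (\<lambda>x. C * norm (f x) powr p)" using f by (simp add: in_Lp_def)
    fix x
    show "(\<Sum>j\<le>n. q j x) \<le> C * norm (f x) powr p"
      using dyadic_sums_split_le[OF r0 N B norm_ge_zero[of "f x"] p, where n = n]
      by (simp add: q_def C_def c_def r_def sum.distrib sum_distrib_left norm_upper_part norm_lower_part_sq)
  qed
  finally show ?thesis unfolding C_def c_def r_def by simp
qed

lemma powr_mult_powr_2_minus:
  fixes y w p :: real
  assumes "0 \<le> y" "0 < w"
  shows "y powr p * w powr (2 - p) = (y / w) powr p * w^2"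
proof -
  have "w^2 = w powr p * w powr (2 - p)" using assms by (simp add: powr_add[symmetric])
  then show ?thesis using assms by (simp add: powr_divide field_simps)
qed

lemma powr_conjugate_weight_eq:
  fixes z a p q :: real
  assumes "0 < z" "0 < a" and q: "p + q * (2 - p) = q"
  shows "(z * a) powr p * (z powr q * a) powr (2 - p) = z powr q * a^2"
proof -
  have "(z * a) powr p * (z powr q * a) powr (2 - p)
      = (z powr p * z powr (q * (2 - p))) * (a powr p * a powr (2 - p))"
    using assms by (simp add: powr_mult powr_powr mult_ac)
  also have "\<dots> = z powr q * a^2"
    using assms by (simp add: q flip: powr_add)
  finally show ?thesis .
qed

lemma le_powr_of_le_mult_powr:
  fixes S c p :: real
  assumes S: "0 < S" and p: "1 < p" and le: "S \<le> c * S powr (2 - p)"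
  shows "S \<le> c powr (1 / (p - 1))"
proof -
  have "S powr (p - 1) * S powr (2 - p) \<le> c * S powr (2 - p)"
    using S le by (simp flip: powr_add)
  then have "S powr (p - 1) \<le> c" using S by simp
  then have "(S powr (p - 1)) powr (1 / (p - 1)) \<le> c powr (1 / (p - 1))"
    using p by (intro powr_mono2) auto
  then show ?thesis using S p by (simp add: powr_powr)
qed

locale L1_L2_bounded =
  fixes M :: "'a measure" and T :: "('a \<Rightarrow> complex) \<Rightarrow> 'i \<Rightarrow> complex"
    and a :: "'i \<Rightarrow> real" and B :: real
  assumes additive: "\<And>g h \<xi>. integrable M g \<Longrightarrow> in_Lp M 2 h \<Longrightarrow> T (\<lambda>x. g x + h x) \<xi> = T g \<xi> + T h \<xi>"
    and L1_bound: "\<And>g \<xi>. integrable M g \<Longrightarrow> norm (T g \<xi>) \<le> a \<xi> * (\<integral>x. norm (g x) \<partial>M)"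
    and L2_bound: "\<And>h F. in_Lp M 2 h \<Longrightarrow> finite F \<Longrightarrow>
                     (\<Sum>\<xi>\<in>F. (norm (T h \<xi>))^2) \<le> B * (\<integral>x. (norm (h x))^2 \<partial>M)"
    and weight_pos: "\<And>\<xi>. 0 < a \<xi>"
    and B_pos: "0 < B"
begin

text \<open>On a level set where \<open>|T f|\<close> is at least \<open>r\<close> times the weight, each index either has small
  \<open>\<phi>\<close> (and is counted by the weak-type bound on the upper part of \<open>f\<close>) or has \<open>|T h|\<close> large for
  the lower part \<open>h\<close> (and is counted by the \<open>L\<^sup>2\<close> bound).\<close>
lemma sum_sq_level_set_le:
  assumes F: "finite F" and \<phi>: "\<And>\<xi>. \<xi> \<in> F \<Longrightarrow> 0 < \<phi> \<xi>"
    and N: "\<And>t. 0 < t \<Longrightarrow> t * (\<Sum>\<xi>\<in>{\<xi>\<in>F. t \<le> \<phi> \<xi>}. (a \<xi>)^2) \<le> N"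
    and f: "in_Lp M p f" and p: "1 < p" "p < 2" and s: "0 < s" and r: "0 < r" and L: "L \<subseteq> F"
    and level: "\<And>\<xi>. \<xi> \<in> L \<Longrightarrow> r * (\<phi> \<xi> * a \<xi>) \<le> norm (T f \<xi>)"
  shows "(\<Sum>\<xi>\<in>L. (\<phi> \<xi> * a \<xi>)^2)
    \<le> 8 * N / r * (\<integral>x. norm (upper_part s f x) \<partial>M)
      + 4 * B / r^2 * (\<integral>x. (norm (lower_part s f x))^2 \<partial>M)"
proof -
  define g where "g = upper_part s f"
  define h where "h = lower_part s f"
  have g: "integrable M g" unfolding g_def by (rule integrable_upper_part[OF f p(1) s])
  have h: "in_Lp M 2 h" unfolding h_def by (rule in_Lp_2_lower_part[OF f p(2) s])
  define I where "I = (\<integral>x. norm (g x) \<partial>M)"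
  define small where "small = {\<xi>\<in>F. \<phi> \<xi> \<le> 2 * I / r}"
  define large where "large = {\<xi>\<in>F. r * (\<phi> \<xi> * a \<xi>) \<le> 2 * norm (T h \<xi>)}"
  have fin: "finite small" "finite large" using F by (auto simp: small_def large_def)
  have "L \<subseteq> small \<union> large"
  proof
    fix \<xi> assume \<xi>: "\<xi> \<in> L"
    show "\<xi> \<in> small \<union> large"
    proof (cases "r * (\<phi> \<xi> * a \<xi>) \<le> 2 * norm (T h \<xi>)")
      case False
      have "T f \<xi> = T g \<xi> + T h \<xi>"
        using additive[OF g h, of \<xi>] by (simp add: g_def h_def upper_part_add_lower_part)
      then have "r * (\<phi> \<xi> * a \<xi>) \<le> norm (T g \<xi>) + norm (T h \<xi>)"
        using level[OF \<xi>] norm_triangle_ineq[of "T g \<xi>" "T h \<xi>"] by simp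
      then have "a \<xi> * (r * \<phi> \<xi>) \<le> a \<xi> * (2 * I)"
        using False L1_bound[OF g, of \<xi>] by (simp add: I_def mult_ac)
      then have "\<phi> \<xi> \<le> 2 * I / r" using weight_pos[of \<xi>] r by (simp add: field_simps)
      then show ?thesis using \<xi> L by (auto simp: small_def)
    qed (use \<xi> L in \<open>auto simp: large_def\<close>)
  qed
  then have "(\<Sum>\<xi>\<in>L. (\<phi> \<xi> * a \<xi>)^2) \<le> (\<Sum>\<xi>\<in>small \<union> large. (\<phi> \<xi> * a \<xi>)^2)"
    using fin by (intro sum_mono2) auto
  also have "\<dots> \<le> (\<Sum>\<xi>\<in>small. (\<phi> \<xi> * a \<xi>)^2) + (\<Sum>\<xi>\<in>large. (\<phi> \<xi> * a \<xi>)^2)"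
    using sum_Un[OF fin, of "\<lambda>\<xi>. (\<phi> \<xi> * a \<xi>)^2"] sum_nonneg[of "small \<inter> large" "\<lambda>\<xi>. (\<phi> \<xi> * a \<xi>)^2"]
    by simp
  also have "(\<Sum>\<xi>\<in>small. (\<phi> \<xi> * a \<xi>)^2) \<le> 8 * N / r * I"
  proof (cases "I = 0")
    case True
    then have "small = {}" using \<phi> by (force simp: small_def)
    then show ?thesis using True by simp
  next
    case False
    then have "0 < 2 * I / r" using r by (simp add: I_def integral_nonneg_AE order_less_le)
    from sum_sq_small_weights_le[OF F \<phi> N this] show ?thesis by (simp add: small_def)
  qed
  also have "(\<Sum>\<xi>\<in>large. (\<phi> \<xi> * a \<xi>)^2) \<le> (\<Sum>\<xi>\<in>large. 4 / r^2 * (norm (T h \<xi>))^2)"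
  proof (rule sum_mono)
    fix \<xi> assume "\<xi> \<in> large"
    then have "\<xi> \<in> F" "r * (\<phi> \<xi> * a \<xi>) \<le> 2 * norm (T h \<xi>)" by (auto simp: large_def)
    moreover have "0 \<le> r * (\<phi> \<xi> * a \<xi>)" using r \<phi>[OF \<open>\<xi> \<in> F\<close>] weight_pos[of \<xi>] by simp
    ultimately have "(r * (\<phi> \<xi> * a \<xi>))^2 \<le> (2 * norm (T h \<xi>))^2" by (intro power_mono)
    then show "(\<phi> \<xi> * a \<xi>)^2 \<le> 4 / r^2 * (norm (T h \<xi>))^2"
      using r by (simp add: field_simps power_mult_distrib)
  qed
  also have "\<dots> = 4 / r^2 * (\<Sum>\<xi>\<in>large. (norm (T h \<xi>))^2)"
    by (simp add: sum_distrib_left)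
  also have "\<dots> \<le> 4 / r^2 * (B * (\<integral>x. (norm (h x))^2 \<partial>M))"
    using L2_bound[OF h fin(2)] r by (intro mult_left_mono) auto
  finally show ?thesis by (simp add: I_def g_def h_def)
qed

theorem paley_inequality:
  assumes F: "finite F" and \<phi>: "\<And>\<xi>. \<xi> \<in> F \<Longrightarrow> 0 < \<phi> \<xi>" and p: "1 < p" "p < 2"
    and N_pos: "0 < N" and N: "\<And>t. 0 < t \<Longrightarrow> t * (\<Sum>\<xi>\<in>{\<xi>\<in>F. t \<le> \<phi> \<xi>}. (a \<xi>)^2) \<le> N"
    and f: "in_Lp M p f"
  shows "(\<Sum>\<xi>\<in>F. norm (T f \<xi>) powr p * (\<phi> \<xi> * a \<xi>) powr (2 - p))
    \<le> paley_const p * B powr (p - 1) * N powr (2 - p) * (\<integral>x. norm (f x) powr p \<partial>M)"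
proof -
  define w where "w \<xi> = \<phi> \<xi> * a \<xi>" for \<xi>
  define l where "l \<xi> = norm (T f \<xi>) / w \<xi>" for \<xi>
  define F' where "F' = {\<xi>\<in>F. T f \<xi> \<noteq> 0}"
  have w: "0 < w \<xi>" if "\<xi> \<in> F" for \<xi> using \<phi>[OF that] weight_pos[of \<xi>] by (simp add: w_def)
  have F': "finite F'" "F' \<subseteq> F" using F by (auto simp: F'_def)
  have l: "0 < l \<xi>" if "\<xi> \<in> F'" for \<xi> using that w F' by (auto simp: l_def F'_def)
  have "(\<Sum>\<xi>\<in>F. norm (T f \<xi>) powr p * (\<phi> \<xi> * a \<xi>) powr (2 - p))
      = (\<Sum>\<xi>\<in>F'. norm (T f \<xi>) powr p * w \<xi> powr (2 - p))"
    unfolding w_def using F F' by (intro sum.mono_neutral_right) (auto simp: F'_def)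
  also have "\<dots> = (\<Sum>\<xi>\<in>F'. l \<xi> powr p * (w \<xi>)^2)"
    using F' w by (intro sum.cong refl) (auto simp: l_def intro!: powr_mult_powr_2_minus)
  also have "\<dots> \<le> paley_const p * B powr (p - 1) * N powr (2 - p) * (\<integral>x. norm (f x) powr p \<partial>M)"
  proof (cases "F' = {}")
    case True
    then show ?thesis using paley_const_pos[OF p] by simp
  next
    case False
    define r0 where "r0 = Min (l ` F')"
    have r0: "0 < r0" using F' False l by (auto simp: r0_def)
    define r where "r j = r0 * 2^j" for j :: nat
    have r: "0 < r j" for j using r0 by (simp add: r_def)
    define s where "s j = N / B * r j" for j
    have s: "0 < s j" for j using r N_pos B_pos by (simp add: s_def)
    define level where "level j = {\<xi>\<in>F'. r j \<le> l \<xi> \<and> l \<xi> < 2 * r j}" for j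
    obtain n where "(\<Sum>\<xi>\<in>F'. l \<xi> powr p * (w \<xi>)^2) \<le> (\<Sum>j\<le>n. \<Sum>\<xi>\<in>level j. l \<xi> powr p * (w \<xi>)^2)"
      using sum_le_sum_dyadic_bands[OF F'(1) r0, of l "\<lambda>\<xi>. l \<xi> powr p * (w \<xi>)^2"] F'
      unfolding level_def r_def r0_def by force
    also have "\<dots> \<le> (\<Sum>j\<le>n. (2 * r j) powr p * (\<Sum>\<xi>\<in>level j. (w \<xi>)^2))"
      unfolding sum_distrib_left
      using l p by (intro sum_mono mult_right_mono powr_mono2) (auto simp: level_def)
    also have "\<dots> \<le> (\<Sum>j\<le>n. (2 * r j) powr p *
        (8 * N / r j * (\<integral>x. norm (upper_part (s j) f x) \<partial>M)
         + 4 * B / (r j)^2 * (\<integral>x. (norm (lower_part (s j) f x))^2 \<partial>M)))"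
    proof (intro sum_mono mult_left_mono)
      fix j
      have "r j * (\<phi> \<xi> * a \<xi>) \<le> norm (T f \<xi>)" if \<xi>: "\<xi> \<in> level j" for \<xi>
      proof -
        have "\<xi> \<in> F" using \<xi> F' by (auto simp: level_def)
        then have "r j * w \<xi> \<le> l \<xi> * w \<xi>"
          using \<xi> w by (intro mult_right_mono) (auto simp: level_def less_imp_le)
        then show ?thesis
          using w[OF \<open>\<xi> \<in> F\<close>] weight_pos[of \<xi>] \<phi>[OF \<open>\<xi> \<in> F\<close>] by (simp add: l_def w_def)
      qed
      then show "(\<Sum>\<xi>\<in>level j. (w \<xi>)^2)
          \<le> 8 * N / r j * (\<integral>x. norm (upper_part (s j) f x) \<partial>M)
            + 4 * B / (r j)^2 * (\<integral>x. (norm (lower_part (s j) f x))^2 \<partial>M)"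
        unfolding w_def using F'
        by (intro sum_sq_level_set_le[OF F \<phi> N f p s r]) (auto simp: level_def)
    qed (simp add: r less_imp_le)
    also have "\<dots> \<le> paley_const p * B powr (p - 1) * N powr (2 - p) * (\<integral>x. norm (f x) powr p \<partial>M)"
      unfolding s_def r_def by (rule sum_dyadic_truncations_le[OF f p B_pos N_pos r0])
    finally show ?thesis .
  qed
  finally show ?thesis .
qed

text \<open>For the weight \<open>\<phi> = (|T f| / a)^q\<close> both the left-hand side of Paley's inequality and the
  admissible \<open>N\<close> equal the sum \<open>S\<close> to be estimated, so Paley's inequality reads
  \<open>S \<le> C * S powr (2 - p) * \<integral>|f|^p\<close>.\<close>
theorem hausdorff_young_inequality:
  assumes F: "finite F" and p: "1 < p" "p < 2" and f: "in_Lp M p f"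
  shows "(\<Sum>\<xi>\<in>F. norm (T f \<xi>) powr (p / (p - 1)) * a \<xi> powr (2 - p / (p - 1)))
    \<le> (paley_const p * B powr (p - 1) * (\<integral>x. norm (f x) powr p \<partial>M)) powr (1 / (p - 1))"
proof -
  define q where "q = p / (p - 1)"
  have q: "p + q * (2 - p) = q" using p by (simp add: q_def field_simps)
  define z where "z \<xi> = norm (T f \<xi>) / a \<xi>" for \<xi>
  define F' where "F' = {\<xi>\<in>F. T f \<xi> \<noteq> 0}"
  have F': "finite F'" "F' \<subseteq> F" using F by (auto simp: F'_def)
  have z: "0 < z \<xi>" if "\<xi> \<in> F'" for \<xi> using that weight_pos[of \<xi>] by (auto simp: z_def F'_def)
  define S where "S = (\<Sum>\<xi>\<in>F'. z \<xi> powr q * (a \<xi>)^2)"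
  define I where "I = (\<integral>x. norm (f x) powr p \<partial>M)"
  have "(\<Sum>\<xi>\<in>F. norm (T f \<xi>) powr q * a \<xi> powr (2 - q))
      = (\<Sum>\<xi>\<in>F'. norm (T f \<xi>) powr q * a \<xi> powr (2 - q))"
    using F F' by (intro sum.mono_neutral_right) (auto simp: F'_def)
  also have "\<dots> = S"
    unfolding S_def z_def using weight_pos by (intro sum.cong refl powr_mult_powr_2_minus) auto
  also have "S \<le> (paley_const p * B powr (p - 1) * I) powr (1 / (p - 1))"
  proof (cases "F' = {}")
    case True
    then show ?thesis by (simp add: S_def)
  next
    case False
    then obtain \<xi>0 where "\<xi>0 \<in> F'" by auto
    moreover have "0 < z \<xi>0 powr q * (a \<xi>0)^2"
      using z[OF \<open>\<xi>0 \<in> F'\<close>] weight_pos[of \<xi>0] by simp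
    ultimately have S_pos: "0 < S"
      unfolding S_def using F' by (intro sum_pos2) auto
    have N: "t * (\<Sum>\<xi>\<in>{\<xi>\<in>F'. t \<le> z \<xi> powr q}. (a \<xi>)^2) \<le> S" if t: "0 < t" for t
    proof -
      have "t * (\<Sum>\<xi>\<in>{\<xi>\<in>F'. t \<le> z \<xi> powr q}. (a \<xi>)^2)
          \<le> (\<Sum>\<xi>\<in>{\<xi>\<in>F'. t \<le> z \<xi> powr q}. z \<xi> powr q * (a \<xi>)^2)"
        unfolding sum_distrib_left by (intro sum_mono mult_right_mono) auto
      also have "\<dots> \<le> S" unfolding S_def using F' by (intro sum_mono2) auto
      finally show ?thesis .
    qed
    have "(\<Sum>\<xi>\<in>F'. norm (T f \<xi>) powr p * (z \<xi> powr q * a \<xi>) powr (2 - p)) = S"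
      unfolding S_def
    proof (intro sum.cong refl)
      fix \<xi> assume "\<xi> \<in> F'"
      then have "norm (T f \<xi>) = z \<xi> * a \<xi>" using weight_pos[of \<xi>] by (simp add: z_def)
      then show "norm (T f \<xi>) powr p * (z \<xi> powr q * a \<xi>) powr (2 - p) = z \<xi> powr q * (a \<xi>)^2"
        using powr_conjugate_weight_eq[OF z[OF \<open>\<xi> \<in> F'\<close>] weight_pos q] by simp
    qed
    moreover have "(\<Sum>\<xi>\<in>F'. norm (T f \<xi>) powr p * (z \<xi> powr q * a \<xi>) powr (2 - p))
        \<le> paley_const p * B powr (p - 1) * S powr (2 - p) * I"
      unfolding I_def using z by (intro paley_inequality[OF F'(1) _ p S_pos N f]) (auto simp: less_le)
    ultimately show ?thesis
      using le_powr_of_le_mult_powr[OF S_pos p(1)] by (simp add: mult_ac)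
  qed
  finally show ?thesis by (simp add: q_def I_def)
qed

end

text \<open>Dividing \<open>\<phi>\<close> by \<open>K\<close> turns the weak-type weight \<open>K * au\<close> back into \<open>au\<close>.\<close>
corollary paley_inequality_dominated:
  assumes T: "L1_L2_bounded M T (\<lambda>\<xi>. K * au \<xi>) B" and K: "0 < K"
    and F: "finite F" and \<phi>: "\<And>\<xi>. 0 < \<phi> \<xi>" and p: "1 < p" "p < 2" and N_pos: "0 < N"
    and N: "\<And>t. 0 < t \<Longrightarrow> t * (\<Sum>\<xi>\<in>{\<xi>\<in>F. t \<le> \<phi> \<xi>}. (au \<xi>)^2) \<le> N" and f: "in_Lp M p f"
  shows "(\<Sum>\<xi>\<in>F. norm (T f \<xi>) powr p * (\<phi> \<xi> * au \<xi>) powr (2 - p))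
    \<le> paley_const p * B powr (p - 1) * K powr (2 - p) * N powr (2 - p) * (\<integral>x. norm (f x) powr p \<partial>M)"
proof -
  interpret L1_L2_bounded M T "\<lambda>\<xi>. K * au \<xi>" B by (fact T)
  have "t * (\<Sum>\<xi>\<in>{\<xi>\<in>F. t \<le> \<phi> \<xi> / K}. (K * au \<xi>)^2) \<le> K * N" if "0 < t" for t
    using N[of "K * t"] K that
    by (simp add: power_mult_distrib field_simps sum_distrib_left[symmetric] power2_eq_square)
  from paley_inequality[OF F _ p _ this f] show ?thesis
    using \<phi> K N_pos by (simp add: powr_mult mult_ac)
qed

section \<open>Interpolation\<close>

lemma interpolation_exponents:
  fixes p q b t :: real
  assumes p: "1 < p" "p < 2" and q: "q = p / (p - 1)" and b: "p \<le> b" "b \<le> q"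
    and t: "t = (q - b) / (q - p)"
  shows "0 \<le> t" "t \<le> 1" "b = t * p + (1 - t) * q" "b * (1 / b - 1 / q) = t * (2 - p)"
    "1 - b / q = t * (2 - p)" "1 - b / p = (1 - t) * (2 - q)" "t + (1 - t) / (p - 1) = b / p"
proof -
  have qp: "q - p = q * (2 - p)" and "p < q" using p by (simp_all add: q field_simps)
  then show "0 \<le> t" "t \<le> 1" using b by (simp_all add: t field_simps)
  have "t * (q - p) = q - b" using \<open>p < q\<close> by (simp add: t)
  moreover have "t * p + (1 - t) * q = q - t * (q - p)" by (simp add: algebra_simps)
  ultimately show b_eq: "b = t * p + (1 - t) * q" by simp
  show tp: "1 - b / q = t * (2 - p)"
    using \<open>p < q\<close> p unfolding t qp by (simp add: field_simps)
  moreover have "b * (1 / b - 1 / q) = 1 - b / q" using b p by (simp add: right_diff_distrib)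
  ultimately show "b * (1 / b - 1 / q) = t * (2 - p)" by simp
  show "1 - b / p = (1 - t) * (2 - q)"
    using p b_eq by (simp add: q field_simps)
  show "t + (1 - t) / (p - 1) = b / p"
    using p b_eq by (simp add: q field_simps)
qed

lemma interpolation_term_eq:
  fixes X u v w b e1 e2 e3 t p q :: real
  assumes X: "0 \<le> X" and pos: "0 < u" "0 < v" "0 < w" and b: "0 < b"
    and r1: "b = t * p + (1 - t) * q" and r2: "b * e1 = t * (2 - p)" and r3: "e2 = t * (2 - p)"
    and r4: "e3 = (1 - t) * (2 - q)"
  shows "(X * u powr e1) powr b * v powr e2 * w powr e3
    = (X powr p * (u * v) powr (2 - p)) powr t * (X powr q * w powr (2 - q)) powr (1 - t)"
proof (cases "X = 0")
  case True
  then show ?thesis using b by simp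
next
  case False
  with X have "0 < X" by simp
  have "ln ((X * u powr e1) powr b * v powr e2 * w powr e3)
      = b * ln X + (b * e1) * ln u + e2 * ln v + e3 * ln w"
    using \<open>0 < X\<close> pos by (simp add: ln_mult ln_powr algebra_simps)
  also have "\<dots> = t * (p * ln X + (2 - p) * (ln u + ln v)) + (1 - t) * (q * ln X + (2 - q) * ln w)"
    unfolding r2 r3 r4 unfolding r1 by (simp add: algebra_simps)
  also have "\<dots> = ln ((X powr p * (u * v) powr (2 - p)) powr t * (X powr q * w powr (2 - q)) powr (1 - t))"
    using \<open>0 < X\<close> pos by (simp add: ln_mult ln_powr)
  finally show ?thesis using \<open>0 < X\<close> pos by (simp add: ln_inj_iff)
qed

lemma powr_interpolate_bounds:
  fixes c1 c2 N I e k t :: real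
  assumes "0 < c1" "0 < c2" "0 < N" "0 \<le> I"
  shows "(c1 * N powr e * I) powr t * (c2 * I powr k) powr (1 - t)
    = c1 powr t * c2 powr (1 - t) * N powr (e * t) * I powr (t + (1 - t) * k)"
proof (cases "I = 0")
  case False
  with assms have "0 < I" by simp
  then show ?thesis
    using assms by (simp add: powr_mult powr_powr powr_add mult_ac)
qed simp

lemma powr_rescaled_bound_eq:
  fixes C N I b p q :: real
  assumes "0 < C" "0 < N" "0 \<le> I" "0 < b"
  shows "(C powr (1 / b) * N powr (1 / b - 1 / q) * I powr (1 / p)) powr b
    = C * N powr (1 - b / q) * I powr (b / p)"
proof -
  have "(1 / b - 1 / q) * b = 1 - b / q" "1 / b * b = 1" using assms(4) by (simp_all add: field_simps)
  then show ?thesis using assms by (simp add: powr_mult powr_powr)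
qed

lemma summable_infsum_powr_le:
  fixes g :: "'i \<Rightarrow> real"
  assumes g: "\<And>\<xi>. 0 \<le> g \<xi>" and b: "0 < b" and S: "0 \<le> S"
    and bound: "\<And>F. finite F \<Longrightarrow> (\<Sum>\<xi>\<in>F. g \<xi>) \<le> S powr b"
  shows "g summable_on UNIV \<and> (\<Sum>\<^sub>\<infinity>\<xi>. g \<xi>) powr (1 / b) \<le> S"
proof
  show summable: "g summable_on UNIV"
    by (rule nonneg_bdd_above_summable_on) (use g bound in \<open>auto simp: bdd_above_def\<close>)
  have "(\<Sum>\<^sub>\<infinity>\<xi>. g \<xi>) \<le> S powr b"
    by (rule infsum_le_finite_sums[OF summable]) (use bound in auto)
  moreover have "0 \<le> (\<Sum>\<^sub>\<infinity>\<xi>. g \<xi>)" by (rule infsum_nonneg) (use g in auto)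
  ultimately have "(\<Sum>\<^sub>\<infinity>\<xi>. g \<xi>) powr (1 / b) \<le> (S powr b) powr (1 / b)"
    using b by (intro powr_mono2) auto
  also have "\<dots> = S" using b S by (simp add: powr_powr)
  finally show "(\<Sum>\<^sub>\<infinity>\<xi>. g \<xi>) powr (1 / b) \<le> S" .
qed

lemma weighted_sum_interpolation_lt_2:
  fixes T :: "('a \<Rightarrow> complex) \<Rightarrow> 'i \<Rightarrow> complex" and p :: real
  defines "q \<equiv> p / (p - 1)"
  assumes Tu: "L1_L2_bounded M T (\<lambda>\<xi>. K * au \<xi>) B" and Tv: "L1_L2_bounded M T av B"
    and au: "\<And>\<xi>. 0 < au \<xi>" and K: "0 < K" and p: "1 < p" "p < 2" and b: "p \<le> b" "b \<le> q"
  obtains C where "0 < C"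
    and "\<And>\<phi> N f F. finite F \<Longrightarrow> (\<And>\<xi>. 0 < \<phi> \<xi>) \<Longrightarrow> 0 < N \<Longrightarrow>
           (\<And>t. 0 < t \<Longrightarrow> t * (\<Sum>\<xi>\<in>{\<xi>\<in>F. t \<le> \<phi> \<xi>}. (au \<xi>)^2) \<le> N) \<Longrightarrow> in_Lp M p f \<Longrightarrow>
           (\<Sum>\<xi>\<in>F. (norm (T f \<xi>) * \<phi> \<xi> powr (1 / b - 1 / q)) powr b
                     * au \<xi> powr (1 - b / q) * av \<xi> powr (1 - b / p))
             \<le> C * N powr (1 - b / q) * (\<integral>x. norm (f x) powr p \<partial>M) powr (b / p)"
proof -
  interpret v: L1_L2_bounded M T av B by (fact Tv)
  define t where "t = (q - b) / (q - p)"
  note exps = interpolation_exponents[OF p meta_eq_to_obj_eq[OF q_def] b t_def]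
  define c1 where "c1 = paley_const p * B powr (p - 1) * K powr (2 - p)"
  define c2 where "c2 = (paley_const p * B powr (p - 1)) powr (1 / (p - 1))"
  have c: "0 < c1" "0 < c2"
    using paley_const_pos[OF p] v.B_pos K by (simp_all add: c1_def c2_def)
  show ?thesis
  proof (rule that[of "c1 powr t * c2 powr (1 - t)"])
    show "0 < c1 powr t * c2 powr (1 - t)" using c by simp
    fix \<phi> :: "'i \<Rightarrow> real" and N :: real and f and F :: "'i set"
    assume F: "finite F" and \<phi>: "\<And>\<xi>. 0 < \<phi> \<xi>" and N_pos: "0 < N"
      and N: "\<And>t. 0 < t \<Longrightarrow> t * (\<Sum>\<xi>\<in>{\<xi>\<in>F. t \<le> \<phi> \<xi>}. (au \<xi>)^2) \<le> N" and f: "in_Lp M p f"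
    define I where "I = (\<integral>x. norm (f x) powr p \<partial>M)"
    have I: "0 \<le> I" by (simp add: I_def)
    define gp where "gp \<xi> = norm (T f \<xi>) powr p * (\<phi> \<xi> * au \<xi>) powr (2 - p)" for \<xi>
    define gq where "gq \<xi> = norm (T f \<xi>) powr q * av \<xi> powr (2 - q)" for \<xi>
    have Sp: "(\<Sum>\<xi>\<in>F. gp \<xi>) \<le> c1 * N powr (2 - p) * I"
      using paley_inequality_dominated[OF Tu K F \<phi> p N_pos N f] by (simp add: gp_def c1_def I_def)
    have Sq: "(\<Sum>\<xi>\<in>F. gq \<xi>) \<le> c2 * I powr (1 / (p - 1))"
      using v.hausdorff_young_inequality[OF F p f] paley_const_pos[OF p] v.B_pos
      by (simp add: gq_def c2_def I_def q_def powr_mult)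
    have "(\<Sum>\<xi>\<in>F. (norm (T f \<xi>) * \<phi> \<xi> powr (1 / b - 1 / q)) powr b
             * au \<xi> powr (1 - b / q) * av \<xi> powr (1 - b / p))
        = (\<Sum>\<xi>\<in>F. gp \<xi> powr t * gq \<xi> powr (1 - t))"
      unfolding gp_def gq_def
      by (intro sum.cong refl interpolation_term_eq exps(3-6)) (use \<phi> au v.weight_pos p b in auto)
    also have "\<dots> \<le> (\<Sum>\<xi>\<in>F. gp \<xi>) powr t * (\<Sum>\<xi>\<in>F. gq \<xi>) powr (1 - t)"
      by (rule sum_powr_holder[OF F exps(1,2)]) (auto simp: gp_def gq_def)
    also have "\<dots> \<le> (c1 * N powr (2 - p) * I) powr t * (c2 * I powr (1 / (p - 1))) powr (1 - t)"
      using Sp Sq exps(1,2) by (intro mult_mono powr_mono2) (auto simp: gp_def gq_def intro: sum_nonneg)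
    also have "\<dots> = c1 powr t * c2 powr (1 - t) * N powr ((2 - p) * t) * I powr (t + (1 - t) * (1 / (p - 1)))"
      by (rule powr_interpolate_bounds[OF c N_pos I])
    also have "\<dots> = c1 powr t * c2 powr (1 - t) * N powr (1 - b / q) * I powr (b / p)"
      using exps(5,7) by (simp add: mult.commute)
    finally show "(\<Sum>\<xi>\<in>F. (norm (T f \<xi>) * \<phi> \<xi> powr (1 / b - 1 / q)) powr b
             * au \<xi> powr (1 - b / q) * av \<xi> powr (1 - b / p))
        \<le> c1 powr t * c2 powr (1 - t) * N powr (1 - b / q) * (\<integral>x. norm (f x) powr p \<partial>M) powr (b / p)"
      by (simp add: I_def)
  qed
qed

lemma weighted_sum_interpolation_le:
  fixes T :: "('a \<Rightarrow> complex) \<Rightarrow> 'i \<Rightarrow> complex" and p :: real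
  defines "q \<equiv> p / (p - 1)"
  assumes Tu: "L1_L2_bounded M T (\<lambda>\<xi>. K * au \<xi>) B" and Tv: "L1_L2_bounded M T av B"
    and au: "\<And>\<xi>. 0 < au \<xi>" and K: "0 < K" and p: "1 < p" "p \<le> 2" and b: "p \<le> b" "b \<le> q"
  obtains C where "0 < C"
    and "\<And>\<phi> N f F. finite F \<Longrightarrow> (\<And>\<xi>. 0 < \<phi> \<xi>) \<Longrightarrow> 0 < N \<Longrightarrow>
           (\<And>t. 0 < t \<Longrightarrow> t * (\<Sum>\<xi>\<in>{\<xi>\<in>F. t \<le> \<phi> \<xi>}. (au \<xi>)^2) \<le> N) \<Longrightarrow> in_Lp M p f \<Longrightarrow>
           (\<Sum>\<xi>\<in>F. (norm (T f \<xi>) * \<phi> \<xi> powr (1 / b - 1 / q)) powr b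
                     * au \<xi> powr (1 - b / q) * av \<xi> powr (1 - b / p))
             \<le> (C * N powr (1 / b - 1 / q) * Lp_norm M p f) powr b"
proof -
  interpret v: L1_L2_bounded M T av B by (fact Tv)
  have b_pos: "0 < b" using p b by simp
  obtain C where C: "0 < C"
    and bound: "\<And>(\<phi> :: 'i \<Rightarrow> real) N f F. finite F \<Longrightarrow> (\<And>\<xi>. 0 < \<phi> \<xi>) \<Longrightarrow> 0 < N \<Longrightarrow>
           (\<And>t. 0 < t \<Longrightarrow> t * (\<Sum>\<xi>\<in>{\<xi>\<in>F. t \<le> \<phi> \<xi>}. (au \<xi>)^2) \<le> N) \<Longrightarrow> in_Lp M p f \<Longrightarrow>
           (\<Sum>\<xi>\<in>F. (norm (T f \<xi>) * \<phi> \<xi> powr (1 / b - 1 / q)) powr b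
                     * au \<xi> powr (1 - b / q) * av \<xi> powr (1 - b / p))
             \<le> C * N powr (1 - b / q) * (\<integral>x. norm (f x) powr p \<partial>M) powr (b / p)"
  proof (cases "p = 2")
    case True
    then have "q = 2" "b = 2" using b by (simp_all add: q_def)
    show ?thesis
    proof (rule that[OF v.B_pos])
      fix \<phi> :: "'i \<Rightarrow> real" and N :: real and f and F :: "'i set"
      assume F: "finite F" and \<phi>: "\<And>\<xi>. 0 < \<phi> \<xi>" and "0 < N" and f: "in_Lp M p f"
      have "\<phi> \<xi> \<noteq> 0" "au \<xi> \<noteq> 0" "av \<xi> \<noteq> 0" for \<xi>
        using \<phi>[of \<xi>] au[of \<xi>] v.weight_pos[of \<xi>] by auto
      then have "(\<Sum>\<xi>\<in>F. (norm (T f \<xi>) * \<phi> \<xi> powr (1 / b - 1 / q)) powr b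
                     * au \<xi> powr (1 - b / q) * av \<xi> powr (1 - b / p))
          = (\<Sum>\<xi>\<in>F. (norm (T f \<xi>))^2)"
        using \<open>q = 2\<close> \<open>b = 2\<close> True by simp
      also have "\<dots> \<le> B * (\<integral>x. norm (f x) powr p \<partial>M)"
        using v.L2_bound[of f F] f F True by (simp add: in_Lp_def)
      finally show "(\<Sum>\<xi>\<in>F. (norm (T f \<xi>) * \<phi> \<xi> powr (1 / b - 1 / q)) powr b
                     * au \<xi> powr (1 - b / q) * av \<xi> powr (1 - b / p))
          \<le> B * N powr (1 - b / q) * (\<integral>x. norm (f x) powr p \<partial>M) powr (b / p)"
        using \<open>q = 2\<close> \<open>b = 2\<close> \<open>0 < N\<close> True by simp
    qed
  next
    case False
    with p have "p < 2" by simp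
    from weighted_sum_interpolation_lt_2[OF Tu Tv au K p(1) this b[unfolded q_def]] that
    show ?thesis unfolding q_def by blast
  qed
  show ?thesis
  proof (rule that[of "C powr (1 / b)"])
    show "0 < C powr (1 / b)" using C by simp
    fix \<phi> :: "'i \<Rightarrow> real" and N :: real and f and F :: "'i set"
    assume F: "finite F" and \<phi>: "\<And>\<xi>. 0 < \<phi> \<xi>" and N_pos: "0 < N"
      and N: "\<And>t. 0 < t \<Longrightarrow> t * (\<Sum>\<xi>\<in>{\<xi>\<in>F. t \<le> \<phi> \<xi>}. (au \<xi>)^2) \<le> N" and f: "in_Lp M p f"
    have "(C powr (1 / b) * N powr (1 / b - 1 / q) * Lp_norm M p f) powr b
        = C * N powr (1 - b / q) * (\<integral>x. norm (f x) powr p \<partial>M) powr (b / p)"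
      unfolding Lp_norm_def by (rule powr_rescaled_bound_eq[OF C N_pos _ b_pos]) simp
    then show "(\<Sum>\<xi>\<in>F. (norm (T f \<xi>) * \<phi> \<xi> powr (1 / b - 1 / q)) powr b
                     * au \<xi> powr (1 - b / q) * av \<xi> powr (1 - b / p))
        \<le> (C powr (1 / b) * N powr (1 / b - 1 / q) * Lp_norm M p f) powr b"
      using bound[OF F \<phi> N_pos N f] by simp
  qed
qed

section \<open>The \<open>L\<close>-Fourier transform\<close>

lemma FL_add:
  assumes "integrable M (\<lambda>x. g x * cnj (v \<xi> x))" and "integrable M (\<lambda>x. h x * cnj (v \<xi> x))"
  shows "FL M v (\<lambda>x. g x + h x) \<xi> = FL M v g \<xi> + FL M v h \<xi>"
  using assms by (simp add: FL_def distrib_right)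

lemma FL_sum_coefficients:
  assumes u: "\<And>\<eta>. in_Lp M 2 (u \<eta>)" and v: "\<And>\<xi>. in_Lp M 2 (v \<xi>)"
    and biorth: "\<And>\<eta> \<xi>. L2_inner M (u \<eta>) (v \<xi>) = (if \<eta> = \<xi> then 1 else 0)" and G: "finite G"
  shows "FL M v (\<lambda>x. \<Sum>\<eta>\<in>G. c \<eta> * u \<eta> x) \<xi> = (if \<xi> \<in> G then c \<xi> else 0)"
proof -
  have int: "integrable M (\<lambda>x. c \<eta> * (u \<eta> x * cnj (v \<xi> x)))" for \<eta>
    using norm_integral_mult_cnj_le(1)[OF u v, of 1] by simp
  have "FL M v (\<lambda>x. \<Sum>\<eta>\<in>G. c \<eta> * u \<eta> x) \<xi> = (\<integral>x. (\<Sum>\<eta>\<in>G. c \<eta> * (u \<eta> x * cnj (v \<xi> x))) \<partial>M)"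
    unfolding FL_def by (simp add: sum_distrib_right mult.assoc)
  also have "\<dots> = (\<Sum>\<eta>\<in>G. c \<eta> * L2_inner M (u \<eta>) (v \<xi>))"
    using int by (simp add: integral_sum L2_inner_def)
  also have "\<dots> = (if \<xi> \<in> G then c \<xi> else 0)"
    using G by (simp add: biorth if_distrib sum.delta cong: if_cong)
  finally show ?thesis .
qed

lemma norm_FL_le_of_sq_integral_le:
  fixes d :: real
  assumes e: "in_Lp M 2 e" and v: "in_Lp M 2 (v \<xi>)" and v_norm: "(\<integral>x. (norm (v \<xi> x))^2 \<partial>M) = 1"
    and close: "(\<integral>x. (norm (e x))^2 \<partial>M) \<le> d^2" and d: "0 < d"
  shows "norm (FL M v e \<xi>) \<le> d"
proof -
  have "norm (FL M v e \<xi>) \<le> ((\<integral>x. (norm (e x))^2 \<partial>M) / d + d * 1) / 2"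
    unfolding FL_def using norm_integral_mult_cnj_le(2)[OF e v d] v_norm by simp
  moreover have "(\<integral>x. (norm (e x))^2 \<partial>M) / d \<le> d"
    using close d by (simp add: field_simps power2_eq_square)
  ultimately show ?thesis by simp
qed

lemma sq_integral_le_of_close:
  fixes d :: real
  assumes h: "in_Lp M 2 h" and s: "in_Lp M 2 s"
    and close: "(\<integral>x. (norm (h x - s x))^2 \<partial>M) \<le> d^2" and d: "0 < d"
  shows "(\<integral>x. (norm (s x))^2 \<partial>M) \<le> (1 + d) * (\<integral>x. (norm (h x))^2 \<partial>M) + (d + d^2)"
proof -
  have e: "in_Lp M 2 (\<lambda>x. h x - s x)" using h s by (rule in_Lp_2_diff)
  have "(norm (s x))^2 \<le> (1 + d) * (norm (h x))^2 + (1 + 1/d) * (norm (h x - s x))^2" for x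
    using norm_add_sq_le[OF d, of "h x" "s x - h x"] by (simp add: norm_minus_commute)
  then have "(\<integral>x. (norm (s x))^2 \<partial>M)
      \<le> (\<integral>x. (1 + d) * (norm (h x))^2 + (1 + 1/d) * (norm (h x - s x))^2 \<partial>M)"
    using h s e by (intro integral_mono) (auto simp: in_Lp_2_iff)
  also have "\<dots> = (1 + d) * (\<integral>x. (norm (h x))^2 \<partial>M) + (1 + 1/d) * (\<integral>x. (norm (h x - s x))^2 \<partial>M)"
    using h e by (simp add: in_Lp_2_iff)
  also have "\<dots> \<le> (1 + d) * (\<integral>x. (norm (h x))^2 \<partial>M) + (1 + 1/d) * d^2"
    using close d by (intro add_left_mono mult_left_mono) auto
  also have "(1 + 1/d) * d^2 = d + d^2" using d by (simp add: field_simps power2_eq_square)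
  finally show ?thesis .
qed

text \<open>One approximation step of Bessel's inequality: \<open>h\<close> is replaced by \<open>s\<close> with known
  coefficients, at the price of terms that vanish as \<open>d \<rightarrow> 0\<close>.\<close>
lemma sum_FL_sq_le_perturbation:
  fixes d :: real
  assumes h: "in_Lp M 2 h" and s: "in_Lp M 2 s" and v: "\<And>\<xi>. in_Lp M 2 (v \<xi>)"
    and v_norm: "\<And>\<xi>. (\<integral>x. (norm (v \<xi> x))^2 \<partial>M) = 1"
    and coeff: "\<And>\<xi>. FL M v s \<xi> = (if \<xi> \<in> G then c \<xi> else 0)"
    and lower: "A * (\<Sum>\<xi>\<in>G. (norm (c \<xi>))^2) \<le> (\<integral>x. (norm (s x))^2 \<partial>M)"
    and close: "(\<integral>x. (norm (h x - s x))^2 \<partial>M) \<le> d^2"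
    and A: "0 < A" and d: "0 < d" and F: "finite F" and G: "finite G"
  shows "(\<Sum>\<xi>\<in>F. (norm (FL M v h \<xi>))^2)
    \<le> (1 + d) * ((1 + d) * (\<integral>x. (norm (h x))^2 \<partial>M) + (d + d^2)) / A + real (card F) * (d + d^2)"
proof -
  define e where "e x = h x - s x" for x
  have e: "in_Lp M 2 e" unfolding e_def using h s by (rule in_Lp_2_diff)
  have int: "integrable M (\<lambda>x. g x * cnj (v \<xi> x))" if "in_Lp M 2 g" for g \<xi>
    using norm_integral_mult_cnj_le(1)[OF that v, of 1] by simp
  have "(\<Sum>\<xi>\<in>F. (norm (FL M v h \<xi>))^2)
      \<le> (\<Sum>\<xi>\<in>F. (1 + d) * (norm (FL M v s \<xi>))^2 + (1 + 1/d) * (norm (FL M v e \<xi>))^2)"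
  proof (rule sum_mono)
    fix \<xi>
    have "FL M v h \<xi> = FL M v s \<xi> + FL M v e \<xi>"
      using FL_add[where g = s and h = e and \<xi> = \<xi>, OF int[OF s] int[OF e]] by (simp add: e_def)
    then show "(norm (FL M v h \<xi>))^2 \<le> (1 + d) * (norm (FL M v s \<xi>))^2 + (1 + 1/d) * (norm (FL M v e \<xi>))^2"
      using norm_add_sq_le[OF d] by simp
  qed
  also have "\<dots> \<le> (1 + d) * (\<Sum>\<xi>\<in>G. (norm (c \<xi>))^2) + (1 + 1/d) * (real (card F) * d^2)"
  proof -
    have "(\<Sum>\<xi>\<in>F. (norm (FL M v s \<xi>))^2) = (\<Sum>\<xi>\<in>F \<inter> G. (norm (c \<xi>))^2)"
      unfolding sum.inter_restrict[OF F] by (rule sum.cong) (auto simp: coeff)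
    also have "\<dots> \<le> (\<Sum>\<xi>\<in>G. (norm (c \<xi>))^2)" using G by (intro sum_mono2) auto
    finally have "(\<Sum>\<xi>\<in>F. (norm (FL M v s \<xi>))^2) \<le> (\<Sum>\<xi>\<in>G. (norm (c \<xi>))^2)" .
    moreover have "norm (FL M v e \<xi>) \<le> d" for \<xi>
      using norm_FL_le_of_sq_integral_le[OF e v v_norm _ d] close by (simp add: e_def)
    then have "(\<Sum>\<xi>\<in>F. (norm (FL M v e \<xi>))^2) \<le> real (card F) * d^2"
      using sum_mono[of F "\<lambda>\<xi>. (norm (FL M v e \<xi>))^2" "\<lambda>_. d^2"] by (simp add: power_mono)
    ultimately show ?thesis
      using d by (simp add: sum.distrib sum_distrib_left[symmetric] add_mono mult_left_mono)
  qed
  also have "\<dots> \<le> (1 + d) * ((1 + d) * (\<integral>x. (norm (h x))^2 \<partial>M) + (d + d^2)) / A + real (card F) * (d + d^2)"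
  proof -
    have "(\<Sum>\<xi>\<in>G. (norm (c \<xi>))^2) \<le> ((1 + d) * (\<integral>x. (norm (h x))^2 \<partial>M) + (d + d^2)) / A"
      using lower sq_integral_le_of_close[OF h s close d] A by (simp add: field_simps)
    then have "(1 + d) * (\<Sum>\<xi>\<in>G. (norm (c \<xi>))^2)
        \<le> (1 + d) * (((1 + d) * (\<integral>x. (norm (h x))^2 \<partial>M) + (d + d^2)) / A)"
      using d by (intro mult_left_mono) auto
    moreover have "(1 + 1/d) * (real (card F) * d^2) = real (card F) * (d + d^2)"
      using d by (simp add: field_simps power2_eq_square)
    ultimately show ?thesis by (simp only: times_divide_eq_right)
  qed
  finally show ?thesis .
qed

theorem riesz_basis_FL_bessel:
  assumes riesz: "riesz_basis M u" and v: "\<And>\<xi>. in_Lp M 2 (v \<xi>)"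
    and v_norm: "\<And>\<xi>. Lp_norm M 2 (v \<xi>) = 1"
    and biorth: "\<And>\<xi> \<eta>. L2_inner M (u \<xi>) (v \<eta>) = (if \<xi> = \<eta> then 1 else 0)"
  obtains B where "0 < B"
    and "\<And>h F. in_Lp M 2 h \<Longrightarrow> finite F \<Longrightarrow>
           (\<Sum>\<xi>\<in>F. (norm (FL M v h \<xi>))^2) \<le> B * (\<integral>x. (norm (h x))^2 \<partial>M)"
proof -
  obtain A where A: "0 < A"
    and lower: "\<And>G c. finite G \<Longrightarrow>
      A * (\<Sum>\<xi>\<in>G. (cmod (c \<xi>))^2) \<le> (Lp_norm M 2 (\<lambda>x. \<Sum>\<xi>\<in>G. c \<xi> * u \<xi> x))^2"
    using riesz unfolding riesz_basis_def by blast
  have u: "\<And>\<xi>. in_Lp M 2 (u \<xi>)" using riesz by (simp add: riesz_basis_def)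
  have v_norm': "(\<integral>x. (norm (v \<xi> x))^2 \<partial>M) = 1" for \<xi>
    using v_norm[of \<xi>] by (simp flip: Lp_norm_2_sq)
  have "(\<Sum>\<xi>\<in>F. (norm (FL M v h \<xi>))^2) \<le> 1 / A * (\<integral>x. (norm (h x))^2 \<partial>M)"
    if h: "in_Lp M 2 h" and F: "finite F" for h F
  proof -
    define H where "H = (\<integral>x. (norm (h x))^2 \<partial>M)"
    define R where "R d = (1 + d) * ((1 + d) * H + (d + d^2)) / A + real (card F) * (d + d^2)" for d :: real
    have "(\<Sum>\<xi>\<in>F. (norm (FL M v h \<xi>))^2) \<le> R d" if d: "0 < d" for d
    proof -
      obtain G c where G: "finite G"
        and close: "Lp_norm M 2 (\<lambda>x. h x - (\<Sum>\<xi>\<in>G. c \<xi> * u \<xi> x)) < d"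
        using riesz h d unfolding riesz_basis_def by blast
      have close_sq: "(\<integral>x. (norm (h x - (\<Sum>\<xi>\<in>G. c \<xi> * u \<xi> x)))^2 \<partial>M) \<le> d^2"
        using close unfolding Lp_norm_2_sq[symmetric] by (intro power_mono) (auto simp: Lp_norm_def)
      have s: "in_Lp M 2 (\<lambda>x. \<Sum>\<xi>\<in>G. c \<xi> * u \<xi> x)"
        using in_Lp_2_sum[OF G, of M "\<lambda>\<xi> x. c \<xi> * u \<xi> x"] in_Lp_2_cmult[OF u] by simp
      show ?thesis
        unfolding R_def H_def
        by (rule sum_FL_sq_le_perturbation[OF h s v v_norm' FL_sum_coefficients[OF u v biorth G]
              lower[OF G, unfolded Lp_norm_2_sq] close_sq A d F G])
    qed
    moreover have "(R \<longlongrightarrow> H / A) (at_right 0)"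
      unfolding R_def using A by (auto intro!: tendsto_eq_intros)
    ultimately have "(\<Sum>\<xi>\<in>F. (norm (FL M v h \<xi>))^2) \<le> H / A"
      by (intro tendsto_lowerbound[of R _ "at_right 0"])
        (auto simp: eventually_at_right_less[THEN eventually_mono])
    then show ?thesis by (simp add: H_def)
  qed
  with A show ?thesis by (intro that[of "1 / A"]) auto
qed

lemma FL_L1_L2_bounded:
  fixes M :: "'a measure" and v :: "'i \<Rightarrow> 'a \<Rightarrow> complex"
  assumes v: "\<And>\<xi>. in_Lp M 2 (v \<xi>)" and v_Linf: "\<And>\<xi>. in_Linf M (v \<xi>)"
    and a: "\<And>\<xi>. Linf_norm M (v \<xi>) \<le> a \<xi>" "\<And>\<xi>. 0 < a \<xi>" and B: "0 < B"
    and bessel: "\<And>h F. in_Lp M 2 h \<Longrightarrow> finite F \<Longrightarrow>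
                   (\<Sum>\<xi>\<in>F. (norm (FL M v h \<xi>))^2) \<le> B * (\<integral>x. (norm (h x))^2 \<partial>M)"
  shows "L1_L2_bounded M (FL M v) a B"
proof
  fix g h :: "'a \<Rightarrow> complex" and \<xi>
  assume g: "integrable M g" and h: "in_Lp M 2 h"
  show "FL M v (\<lambda>x. g x + h x) \<xi> = FL M v g \<xi> + FL M v h \<xi>"
    by (rule FL_add[OF integrable_mult_cnj_Linf(1)[OF g v_Linf] norm_integral_mult_cnj_le(1)[OF h v, where e = 1]])
      simp
next
  fix g :: "'a \<Rightarrow> complex" and \<xi>
  assume g: "integrable M g"
  have "norm (FL M v g \<xi>) \<le> Linf_norm M (v \<xi>) * (\<integral>x. norm (g x) \<partial>M)"
    unfolding FL_def by (rule integrable_mult_cnj_Linf(2)[OF g v_Linf])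
  also have "\<dots> \<le> a \<xi> * (\<integral>x. norm (g x) \<partial>M)"
    using a(1) by (intro mult_right_mono) auto
  finally show "norm (FL M v g \<xi>) \<le> a \<xi> * (\<integral>x. norm (g x) \<partial>M)" .
qed (use a(2) B bessel in auto)

lemma sum_le_Mphi:
  assumes fin: "Mphi M u \<phi> < \<infinity>" and t: "0 < t" and F: "finite F"
  shows "t * (\<Sum>\<xi>\<in>{\<xi>\<in>F. t \<le> \<phi> \<xi>}. (Linf_norm M (u \<xi>))^2) \<le> enn2real (Mphi M u \<phi>)"
proof -
  have "(\<Sum>\<xi>\<in>{\<xi>\<in>F. t \<le> \<phi> \<xi>}. ennreal ((Linf_norm M (u \<xi>))^2))
      = (\<Sum>\<^sub>\<infinity>\<xi>\<in>{\<xi>\<in>F. t \<le> \<phi> \<xi>}. ennreal ((Linf_norm M (u \<xi>))^2))"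
    using F by (simp add: infsum_finite)
  also have "\<dots> \<le> (\<Sum>\<^sub>\<infinity>\<xi>\<in>{\<xi>. t \<le> \<phi> \<xi>}. ennreal ((Linf_norm M (u \<xi>))^2))"
    by (intro infsum_mono_neutral nonneg_summable_on_complete) auto
  finally have "ennreal t * (\<Sum>\<xi>\<in>{\<xi>\<in>F. t \<le> \<phi> \<xi>}. ennreal ((Linf_norm M (u \<xi>))^2))
      \<le> ennreal t * (\<Sum>\<^sub>\<infinity>\<xi>\<in>{\<xi>. t \<le> \<phi> \<xi>}. ennreal ((Linf_norm M (u \<xi>))^2))"
    by (rule mult_left_mono) simp
  also have "\<dots> \<le> Mphi M u \<phi>" unfolding Mphi_def using t by (intro SUP_upper) auto
  finally have "ennreal (t * (\<Sum>\<xi>\<in>{\<xi>\<in>F. t \<le> \<phi> \<xi>}. (Linf_norm M (u \<xi>))^2)) \<le> Mphi M u \<phi>"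
    using t by (simp add: ennreal_mult' sum_ennreal)
  then show ?thesis
    using enn2real_mono[of _ "Mphi M u \<phi>"] fin t by (fastforce simp: sum_nonneg)
qed

lemma Mphi_pos:
  assumes fin: "Mphi M u \<phi> < \<infinity>" and \<phi>: "0 < \<phi> \<xi>" and u: "0 < Linf_norm M (u \<xi>)"
  shows "0 < enn2real (Mphi M u \<phi>)"
proof -
  have "{\<eta>\<in>{\<xi>}. \<phi> \<xi> \<le> \<phi> \<eta>} = {\<xi>}" by auto
  then have "0 < \<phi> \<xi> * (\<Sum>\<eta>\<in>{\<eta>\<in>{\<xi>}. \<phi> \<xi> \<le> \<phi> \<eta>}. (Linf_norm M (u \<eta>))^2)"
    using \<phi> u by simp
  also have "\<dots> \<le> enn2real (Mphi M u \<phi>)" by (rule sum_le_Mphi[OF fin \<phi>]) simp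
  finally show ?thesis .
qed

lemma le_mult_of_bounded_ratio:
  fixes x y :: "'i \<Rightarrow> real"
  assumes ratio: "\<exists>K. \<forall>\<xi>. x \<xi> / y \<xi> \<le> K" and y: "\<And>\<xi>. 0 < y \<xi>"
  obtains K where "0 < K" "\<And>\<xi>. x \<xi> \<le> K * y \<xi>"
proof -
  obtain K0 where K0: "\<And>\<xi>. x \<xi> / y \<xi> \<le> K0" using ratio by blast
  have "x \<xi> \<le> max K0 1 * y \<xi>" for \<xi>
  proof -
    have "x \<xi> \<le> K0 * y \<xi>" using K0[of \<xi>] y[of \<xi>] by (simp add: divide_le_eq)
    also have "\<dots> \<le> max K0 1 * y \<xi>" using y[of \<xi>] by (intro mult_right_mono) auto
    finally show ?thesis .
  qed
  then show ?thesis by (intro that[of "max K0 1"]) auto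
qed

lemma FL_weighted_sum_le:
  fixes M :: "'a measure" and u v :: "'i \<Rightarrow> 'a \<Rightarrow> complex" and p b :: real
  defines "q \<equiv> p / (p - 1)"
  assumes riesz: "riesz_basis M u" and v: "\<And>\<xi>. in_Lp M 2 (v \<xi>)"
    and u_norm: "\<And>\<xi>. Lp_norm M 2 (u \<xi>) = 1" and v_norm: "\<And>\<xi>. Lp_norm M 2 (v \<xi>) = 1"
    and biorth: "\<And>\<xi> \<eta>. L2_inner M (u \<xi>) (v \<eta>) = (if \<xi> = \<eta> then 1 else 0)"
    and u_Linf: "\<And>\<xi>. in_Linf M (u \<xi>)" and v_Linf: "\<And>\<xi>. in_Linf M (v \<xi>)"
    and ratio: "\<exists>K. \<forall>\<xi>. Linf_norm M (v \<xi>) / Linf_norm M (u \<xi>) \<le> K"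
    and p: "1 < p" "p \<le> 2" and b: "p \<le> b" "b \<le> q"
  obtains C where "0 < C"
    and "\<And>\<phi> f F. finite F \<Longrightarrow> (\<And>\<xi>. 0 < \<phi> \<xi>) \<Longrightarrow> Mphi M u \<phi> < \<infinity> \<Longrightarrow> in_Lp M p f \<Longrightarrow>
           (\<Sum>\<xi>\<in>F. (cmod (FL M v f \<xi>) * \<phi> \<xi> powr (1 / b - 1 / q)) powr b
                     * Linf_norm M (u \<xi>) powr (1 - b / q) * Linf_norm M (v \<xi>) powr (1 - b / p))
             \<le> (C * enn2real (Mphi M u \<phi>) powr (1 / b - 1 / q) * Lp_norm M p f) powr b"
proof -
  have lu: "\<And>\<xi>. 0 < Linf_norm M (u \<xi>)" using Linf_norm_pos[OF u_Linf u_norm] .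
  have lv: "\<And>\<xi>. 0 < Linf_norm M (v \<xi>)" using Linf_norm_pos[OF v_Linf v_norm] .
  obtain B where B: "0 < B" and bessel: "\<And>h F. in_Lp M 2 h \<Longrightarrow> finite F \<Longrightarrow>
      (\<Sum>\<xi>\<in>F. (norm (FL M v h \<xi>))^2) \<le> B * (\<integral>x. (norm (h x))^2 \<partial>M)"
    using riesz_basis_FL_bessel[OF riesz v v_norm biorth] by blast
  obtain K where K: "0 < K" and lv_le: "\<And>\<xi>. Linf_norm M (v \<xi>) \<le> K * Linf_norm M (u \<xi>)"
    using le_mult_of_bounded_ratio[OF ratio lu] by blast
  have Tu: "L1_L2_bounded M (FL M v) (\<lambda>\<xi>. K * Linf_norm M (u \<xi>)) B"
    and Tv: "L1_L2_bounded M (FL M v) (\<lambda>\<xi>. Linf_norm M (v \<xi>)) B"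
    using FL_L1_L2_bounded[OF v v_Linf _ _ B bessel] lv_le K lu lv by auto
  obtain C where "0 < C" and bound: "\<And>\<phi> N f F. finite F \<Longrightarrow> (\<And>\<xi>. 0 < \<phi> \<xi>) \<Longrightarrow> 0 < N \<Longrightarrow>
      (\<And>t. 0 < t \<Longrightarrow> t * (\<Sum>\<xi>\<in>{\<xi>\<in>F. t \<le> \<phi> \<xi>}. (Linf_norm M (u \<xi>))^2) \<le> N) \<Longrightarrow> in_Lp M p f \<Longrightarrow>
      (\<Sum>\<xi>\<in>F. (norm (FL M v f \<xi>) * \<phi> \<xi> powr (1 / b - 1 / q)) powr b
                 * Linf_norm M (u \<xi>) powr (1 - b / q) * Linf_norm M (v \<xi>) powr (1 - b / p))
        \<le> (C * N powr (1 / b - 1 / q) * Lp_norm M p f) powr b"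
    using weighted_sum_interpolation_le[where au = "\<lambda>\<xi>. Linf_norm M (u \<xi>)", OF Tu Tv lu K p
        b[unfolded q_def]]
    unfolding q_def by blast
  show ?thesis
  proof (rule that[OF \<open>0 < C\<close>])
    fix \<phi> :: "'i \<Rightarrow> real" and f and F :: "'i set"
    assume F: "finite F" and \<phi>: "\<And>\<xi>. 0 < \<phi> \<xi>" and fin: "Mphi M u \<phi> < \<infinity>" and f: "in_Lp M p f"
    show "(\<Sum>\<xi>\<in>F. (cmod (FL M v f \<xi>) * \<phi> \<xi> powr (1 / b - 1 / q)) powr b
                     * Linf_norm M (u \<xi>) powr (1 - b / q) * Linf_norm M (v \<xi>) powr (1 - b / p))
        \<le> (C * enn2real (Mphi M u \<phi>) powr (1 / b - 1 / q) * Lp_norm M p f) powr b"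
      by (rule bound[OF F \<phi> Mphi_pos[OF fin \<phi> lu] sum_le_Mphi[OF fin _ F] f])
  qed
qed

theorem mainTheorem7:
  fixes M :: "'a measure" and u v :: "'i \<Rightarrow> 'a \<Rightarrow> complex" and p b :: real
  assumes sf: "sigma_finite_measure M"
    and uL2: "\<And>\<xi>. in_Lp M 2 (u \<xi>)" and vL2: "\<And>\<xi>. in_Lp M 2 (v \<xi>)"
    and unorm: "\<And>\<xi>. Lp_norm M 2 (u \<xi>) = 1" and vnorm: "\<And>\<xi>. Lp_norm M 2 (v \<xi>) = 1"
    and biorth: "\<And>\<xi> \<eta>. L2_inner M (u \<xi>) (v \<eta>) = (if \<xi> = \<eta> then 1 else 0)"
    and riesz: "riesz_basis M u"
    and uLinf: "\<And>\<xi>. in_Linf M (u \<xi>)" and vLinf: "\<And>\<xi>. in_Linf M (v \<xi>)"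
    and ratio: "\<exists>K. \<forall>\<xi>. Linf_norm M (v \<xi>) / Linf_norm M (u \<xi>) \<le> K"
    and p: "1 < p" "p \<le> 2"
    and b: "p \<le> b" "b \<le> p / (p - 1)"
  shows "\<exists>C>0. \<forall>\<phi> :: 'i \<Rightarrow> real. (\<forall>\<xi>. 0 < \<phi> \<xi>) \<longrightarrow> Mphi M u \<phi> < \<infinity> \<longrightarrow>
     (\<forall>f. in_Lp M p f \<longrightarrow>
        (let q = p / (p - 1);
             g = (\<lambda>\<xi>. (cmod (FL M v f \<xi>) * \<phi> \<xi> powr (1 / b - 1 / q)) powr b
                       * Linf_norm M (u \<xi>) powr (1 - b / q)
                       * Linf_norm M (v \<xi>) powr (1 - b / p))
         in g summable_on UNIV \<and>
            (\<Sum>\<^sub>\<infinity>\<xi>. g \<xi>) powr (1 / b)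
              \<le> C * enn2real (Mphi M u \<phi>) powr (1 / b - 1 / q) * Lp_norm M p f))"
proof -
  obtain C where C: "0 < C" and bound: "\<And>\<phi> f F. finite F \<Longrightarrow> (\<And>\<xi>. 0 < \<phi> \<xi>) \<Longrightarrow>
      Mphi M u \<phi> < \<infinity> \<Longrightarrow> in_Lp M p f \<Longrightarrow>
      (\<Sum>\<xi>\<in>F. (cmod (FL M v f \<xi>) * \<phi> \<xi> powr (1 / b - 1 / (p / (p - 1)))) powr b
                 * Linf_norm M (u \<xi>) powr (1 - b / (p / (p - 1))) * Linf_norm M (v \<xi>) powr (1 - b / p))
        \<le> (C * enn2real (Mphi M u \<phi>) powr (1 / b - 1 / (p / (p - 1))) * Lp_norm M p f) powr b"
    using FL_weighted_sum_le[OF riesz vL2 unorm vnorm biorth uLinf vLinf ratio p b] by blast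
  show ?thesis
  proof (rule exI[of _ C], intro conjI C allI impI, unfold Let_def,
      rule summable_infsum_powr_le[rotated 3], rule bound)
  qed (use C p b in \<open>auto simp: Lp_norm_def\<close>)
qed

end
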